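(* Let $U=\langle d^*,e^*,f^*\rangle\le W'^*$ and $W''^*:=W'^*/U$, a $3$-dimensional $G$-module with basis the images of $a^*,b^*,c^*$, so that $S[W''^*]=\mathbb F_2[a^*,b^*,c^*]$. The $G$-equivariant surjection $\rho\colon S[W'^*]\to S[W''^*]$ sending $a^*,b^*,c^*$ to themselves and $d^*,e^*,f^*$ to $0$ restricts to a surjective map $S[W'^*]^G\to S[W''^*]^G$. Moreover $S[W''^*]^G=\mathbb F_2[c_0,c_1,c_2]$ is a polynomial ring on the Dickson invariants $c_2=a^{*4}+b^{*4}+c^{*4}+a^{*2}b^{*2}+a^{*2}c^{*2}+b^{*2}c^{*2}+a^{*2}b^*c^*+a^*b^{*2}c^*+a^*b^*c^{*2}$, $c_1=a^{*4}b^{*2}+a^{*2}b^{*4}+a^{*4}c^{*2}+a^{*2}c^{*4}+b^{*4}c^{*2}+b^{*2}c^{*4}+a^{*4}b^*c^*+a^*b^{*4}c^*+a^*b^*c^{*4}+a^{*2}b^{*2}c^{*2}$, $c_0=a^{*4}b^{*2}c^*+a^{*4}b^*c^{*2}+a^{*2}b^{*4}c^*+a^*b^{*4}c^{*2}+a^{*2}b^*c^{*4}+a^*b^{*2}c^{*4}$, and $c_0,c_1,c_2$ are images under $\rho$ of elements of $S[W'^*]^G$ of degrees $7,6,4$ respectively.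
   Context: $G=GL_3(\mathbb F_2)$, generated by $A=\begin{pmatrix}1&0&1\\0&1&0\\0&0&1\end{pmatrix}$ and $B=\begin{pmatrix}0&0&1\\1&0&0\\0&1&0\end{pmatrix}$. $W'^*$ is the 6-dimensional $\mathbb F_2$-vector space of row vectors with basis $a^*,b^*,c^*,d^*,e^*,f^*$, a right $G$-module via the representation $D$ with $D(A)=\begin{pmatrix}1&0&1&0&0&1\\0&1&0&0&0&0\\0&0&1&0&0&0\\0&0&0&1&1&0\\0&0&0&0&1&0\\0&0&0&0&0&1\end{pmatrix}$, $D(B)=\begin{pmatrix}0&0&1&0&0&0\\1&0&0&0&0&0\\0&1&0&0&0&0\\0&0&0&0&0&1\\0&0&0&1&0&0\\0&0&0&0&1&0\end{pmatrix}$. The subspace $\langle d^*,e^*,f^*\rangle$ is $G$-stable. $S[X]$ denotes the symmetric algebra (polynomial ring) with induced $G$-action and $S[X]^G$ its invariant ring. *)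

theory Defs
  imports "HOL-Library.Poly_Mapping" "HOL-Library.Z2"
begin

text \<open>Polynomials over F_2 = bit in variables indexed by nat
  (variable 0,1,2,3,4,5 stand for a*,b*,c*,d*,e*,f*).
  A monomial is a finitely supported exponent vector nat =>0 nat.\<close>

type_synonym mono = "nat \<Rightarrow>\<^sub>0 nat"
type_synonym mpoly = "mono \<Rightarrow>\<^sub>0 bit"

definition Const :: "bit \<Rightarrow> mpoly" where
  "Const c = Poly_Mapping.single 0 c"

definition Var :: "nat \<Rightarrow> mpoly" where
  "Var i = Poly_Mapping.single (Poly_Mapping.single i 1) 1"

definition eval_subst :: "(nat \<Rightarrow> mpoly) \<Rightarrow> mpoly \<Rightarrow> mpoly" where
  "eval_subst \<sigma> p =
     (\<Sum>m::mono\<in>Poly_Mapping.keys p. Const (Poly_Mapping.lookup p m) * (\<Prod>i::nat\<in>Poly_Mapping.keys m. \<sigma> i ^ Poly_Mapping.lookup m i))"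

definition polys_in :: "nat \<Rightarrow> mpoly set" where
  "polys_in n = {p. \<forall>m\<in>Poly_Mapping.keys p. Poly_Mapping.keys m \<subseteq> {..<n}}"

definition tdeg :: "mono \<Rightarrow> nat" where
  "tdeg m = (\<Sum>i\<in>Poly_Mapping.keys m. Poly_Mapping.lookup m i)"

definition homogeneous :: "nat \<Rightarrow> mpoly \<Rightarrow> bool" where
  "homogeneous d p \<longleftrightarrow> (\<forall>m\<in>Poly_Mapping.keys p. tdeg m = d)"

text \<open>Matrices over F_2 as functions nat => nat => bit (entries outside the
  relevant index range are irrelevant).\<close>
type_synonym mat = "nat \<Rightarrow> nat \<Rightarrow> bit"

definition matmul :: "nat \<Rightarrow> mat \<Rightarrow> mat \<Rightarrow> mat" where
  "matmul n M N = (\<lambda>i j. \<Sum>k<n. M i k * N k j)"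

text \<open>Induced (right) action of an n x n matrix M on the polynomial ring on the
  basis vectors x_0..x_{n-1} of the row space: x_i |-> x_i M = sum_j M i j x_j.\<close>
definition act :: "nat \<Rightarrow> mat \<Rightarrow> mpoly \<Rightarrow> mpoly" where
  "act n M p = eval_subst (\<lambda>i. if i < n then (\<Sum>j<n. Const (M i j) * Var j) else Var i) p"

definition mat_of_list :: "bit list list \<Rightarrow> mat" where
  "mat_of_list rows = (\<lambda>i j. if i < length rows \<and> j < length (rows ! i) then rows ! i ! j else 0)"

definition DA :: mat where
  "DA = mat_of_list
     [[1,0,1,0,0,1],
      [0,1,0,0,0,0],
      [0,0,1,0,0,0],
      [0,0,0,1,1,0],
      [0,0,0,0,1,0],
      [0,0,0,0,0,1]]"

definition DB :: mat where
  "DB = mat_of_list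
     [[0,0,1,0,0,0],
      [1,0,0,0,0,0],
      [0,1,0,0,0,0],
      [0,0,0,0,0,1],
      [0,0,0,1,0,0],
      [0,0,0,0,1,0]]"

text \<open>D(G): the image of G = GL_3(F_2) = <A,B> under the representation D,
  i.e. the closure of {D(A), D(B)} under matrix multiplication (a finite
  group, so closure under products is the generated group).\<close>
inductive_set DG :: "mat set" where
  gen_A: "DA \<in> DG"
| gen_B: "DB \<in> DG"
| mult: "M \<in> DG \<Longrightarrow> N \<in> DG \<Longrightarrow> matmul 6 M N \<in> DG"

text \<open>S[W'*] = polys_in 6, S[W''*] = polys_in 3. G acts on W''* = W'*/U
  via the top-left 3 x 3 block of D(g) (U = <d*,e*,f*> is stable).\<close>
definition Inv6 :: "mpoly set" where
  "Inv6 = {p \<in> polys_in 6. \<forall>g\<in>DG. act 6 g p = p}"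

definition Inv3 :: "mpoly set" where
  "Inv3 = {p \<in> polys_in 3. \<forall>g\<in>DG. act 3 g p = p}"

definition rho :: "mpoly \<Rightarrow> mpoly" where
  "rho p = eval_subst (\<lambda>i. if i < 3 then Var i else 0) p"

abbreviation "xa \<equiv> Var 0"
abbreviation "xb \<equiv> Var 1"
abbreviation "xc \<equiv> Var 2"

definition dick2 :: mpoly where
  "dick2 = xa^4 + xb^4 + xc^4 + xa^2*xb^2 + xa^2*xc^2 + xb^2*xc^2
         + xa^2*xb*xc + xa*xb^2*xc + xa*xb*xc^2"

definition dick1 :: mpoly where
  "dick1 = xa^4*xb^2 + xa^2*xb^4 + xa^4*xc^2 + xa^2*xc^4 + xb^4*xc^2 + xb^2*xc^4
         + xa^4*xb*xc + xa*xb^4*xc + xa*xb*xc^4 + xa^2*xb^2*xc^2"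

definition dick0 :: mpoly where
  "dick0 = xa^4*xb^2*xc + xa^4*xb*xc^2 + xa^2*xb^4*xc + xa*xb^4*xc^2
         + xa^2*xb*xc^4 + xa*xb^2*xc^4"

definition dickson_eval :: "mpoly \<Rightarrow> mpoly" where
  "dickson_eval = eval_subst (\<lambda>i. if i = 0 then dick0 else if i = 1 then dick1
                                  else if i = 2 then dick2 else 0)"

end

(*
  Dickson's theorem is proved by induction on the degree, one variable at a time. An invariant f
  of GL_3(F_2) is fixed by the transvections x_j -> x_j + x_2. Expanding to first order in x_2
  and using characteristic 2, this forces f(x_0, x_1, 0) to have only even exponents, so it is the
  square k^2 of a GL_2(F_2)-invariant k. By the two-variable case k is a polynomial in the
  Dickson invariants of GL_2(F_2), whose squares are the restrictions of c_2 and c_1. Hence some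
  polynomial g in c_2, c_1, c_0 has the same restriction as f, so f + g vanishes on the plane
  x_2 = 0 and, by invariance, on all seven planes; it is therefore divisible by their product c_0,
  with an invariant quotient of smaller degree. Algebraic independence follows the same pattern,
  since restricting to x_2 = 0 kills c_0 and squares the two-variable invariants.

  For the lifting: c_0, c_1, c_2 are the elementary symmetric functions of the seven nonzero
  linear forms in a*, b*, c*, and these forms lift to seven linear forms on W'* that D(A) and
  D(B) still permute.
*)
theory Submission
  imports Defs "HOL-Library.Multiset"
begin

declare add_bit_eq_xor [simp del] mult_bit_eq_and [simp del]

lemma bit_mult_self [simp]: "(c::bit) * c = c"
  by (cases c) simp_all

lemma mpoly_two_eq_0 [simp]: "(2::mpoly) = 0"
  by (metis bit_2_eq_0 single_numeral single_zero)

lemma mpoly_uminus [simp]: "- (p::mpoly) = p"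
  by (rule poly_mapping_eqI) simp

lemma mpoly_diff_eq_add [simp]: "(p::mpoly) - q = p + q"
  by (metis diff_conv_add_uminus mpoly_uminus)

lemma mpoly_add_self [simp]: "(p::mpoly) + p = 0"
  by (metis mpoly_diff_eq_add right_minus_eq)

lemma mpoly_add_self_left [simp]: "(p::mpoly) + (p + q) = q"
  by (metis add.assoc add.left_neutral mpoly_add_self)

lemma mpoly_eq_iff_add_eq_0: "(p::mpoly) = q \<longleftrightarrow> p + q = 0"
  by (metis mpoly_diff_eq_add right_minus_eq)

lemma mpoly_add_eq_iff: "(p::mpoly) + q = r \<longleftrightarrow> p = q + r"
  by (auto simp: add_ac)

lemma mpoly_power2_add: "((p::mpoly) + q)^2 = p^2 + q^2"
proof -
  have "(p + q)^2 = p^2 + q^2 + 2 * (p * q)" by algebra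
  then show ?thesis by simp
qed

lemma mpoly_power2_sum: "(sum f A)^2 = (\<Sum>a\<in>A. (f a :: mpoly)^2)"
  by (induction A rule: infinite_finite_induct) (auto simp: mpoly_power2_add)

lemma mpoly_power2_inj: "(p::mpoly)^2 = q^2 \<Longrightarrow> p = q"
  by (metis mpoly_eq_iff_add_eq_0 mpoly_power2_add zero_eq_power2)

lemma Const_0 [simp]: "Const 0 = 0"
  by (simp add: Const_def)

lemma Const_1 [simp]: "Const 1 = 1"
  by (simp add: Const_def)

lemma Const_add: "Const (a + b) = Const a + Const b"
  unfolding Const_def by (rule single_add)

lemma Const_mult: "Const (a * b) = Const a * Const b"
  by (simp add: Const_def mult_single)

lemma Const_sum: "Const (sum f A) = (\<Sum>a\<in>A. Const (f a))"
  by (induction A rule: infinite_finite_induct) (auto simp: Const_add)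

lemma Const_mult_single: "Const c * Poly_Mapping.single m d = Poly_Mapping.single m (c * d)"
  by (simp add: Const_def mult_single)

lemma Const_power2 [simp]: "Const c ^ 2 = Const c"
  by (metis Const_mult bit_mult_self power2_eq_square)

lemma Var_neq_0 [simp]: "Var i \<noteq> 0"
  by (metis Var_def lookup_single_eq lookup_zero one_neq_zero)

lemma Var_inject [simp]: "Var i = Var j \<longleftrightarrow> i = j"
  unfolding Var_def by (metis inj_single injD lookup_single_eq one_neq_zero lookup_single_not_eq)

lemma Var_add_Var_eq_0 [simp]: "Var i + Var j = 0 \<longleftrightarrow> i = j"
  by (metis Var_inject mpoly_eq_iff_add_eq_0)

lemma Var_add_Var_add_Var_neq_0:
  assumes "i \<noteq> j" "i \<noteq> k" "j \<noteq> k"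
  shows "Var i + Var j + Var k \<noteq> 0"
proof
  assume "Var i + Var j + Var k = 0"
  then have "Poly_Mapping.lookup (Var i + Var j + Var k) (Poly_Mapping.single i 1) = 0"
    by simp
  moreover have "Poly_Mapping.single j 1 \<noteq> Poly_Mapping.single i (1::nat)"
    "Poly_Mapping.single k 1 \<noteq> Poly_Mapping.single i (1::nat)"
    using assms by (metis lookup_single_eq lookup_single_not_eq one_neq_zero)+
  ultimately show False
    by (simp add: lookup_add Var_def lookup_single)
qed

lemma poly_mapping_sum_single:
  "p = (\<Sum>m\<in>Poly_Mapping.keys p. Poly_Mapping.single m (Poly_Mapping.lookup p m))"
proof (rule poly_mapping_eqI)
  fix k
  have "(\<Sum>m\<in>Poly_Mapping.keys p. Poly_Mapping.lookup (Poly_Mapping.single m (Poly_Mapping.lookup p m)) k)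
        = Poly_Mapping.lookup p k"
    by (cases "k \<in> Poly_Mapping.keys p")
       (auto simp: lookup_single when_def in_keys_iff sum.remove intro!: sum.neutral)
  then show "Poly_Mapping.lookup p k
      = Poly_Mapping.lookup (\<Sum>m\<in>Poly_Mapping.keys p. Poly_Mapping.single m (Poly_Mapping.lookup p m)) k"
    by (simp add: lookup_sum)
qed

definition monom_subst :: "(nat \<Rightarrow> mpoly) \<Rightarrow> mono \<Rightarrow> mpoly" where
  "monom_subst \<sigma> m = (\<Prod>i\<in>Poly_Mapping.keys m. \<sigma> i ^ Poly_Mapping.lookup m i)"

lemma monom_subst_superset:
  assumes "finite S" "Poly_Mapping.keys m \<subseteq> S"
  shows "monom_subst \<sigma> m = (\<Prod>i\<in>S. \<sigma> i ^ Poly_Mapping.lookup m i)"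
  unfolding monom_subst_def
  by (rule prod.mono_neutral_left) (use assms in \<open>auto simp: in_keys_iff\<close>)

lemma monom_subst_add: "monom_subst \<sigma> (m + n) = monom_subst \<sigma> m * monom_subst \<sigma> n"
proof -
  let ?S = "Poly_Mapping.keys m \<union> Poly_Mapping.keys n"
  have "monom_subst \<sigma> (m + n) = (\<Prod>i\<in>?S. \<sigma> i ^ Poly_Mapping.lookup (m + n) i)"
    by (rule monom_subst_superset) (simp_all add: keys_add)
  also have "\<dots> = (\<Prod>i\<in>?S. \<sigma> i ^ Poly_Mapping.lookup m i) * (\<Prod>i\<in>?S. \<sigma> i ^ Poly_Mapping.lookup n i)"
    by (simp add: lookup_add power_add prod.distrib)
  also have "\<dots> = monom_subst \<sigma> m * monom_subst \<sigma> n"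
    by (simp add: monom_subst_superset[of ?S])
  finally show ?thesis .
qed

lemma monom_subst_split:
  "monom_subst \<sigma> m = \<sigma> j ^ Poly_Mapping.lookup m j
     * (\<Prod>l\<in>Poly_Mapping.keys m - {j}. \<sigma> l ^ Poly_Mapping.lookup m l)"
proof -
  have "monom_subst \<sigma> m = (\<Prod>l\<in>insert j (Poly_Mapping.keys m). \<sigma> l ^ Poly_Mapping.lookup m l)"
    by (rule monom_subst_superset) auto
  also have "\<dots> = \<sigma> j ^ Poly_Mapping.lookup m j
      * (\<Prod>l\<in>insert j (Poly_Mapping.keys m) - {j}. \<sigma> l ^ Poly_Mapping.lookup m l)"
    by (rule prod.remove) simp_all
  finally show ?thesis by simp
qed

lemma eval_subst_monom:
  "eval_subst \<sigma> p = (\<Sum>m\<in>Poly_Mapping.keys p. Const (Poly_Mapping.lookup p m) * monom_subst \<sigma> m)"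
  by (simp add: eval_subst_def monom_subst_def)

lemma eval_subst_superset:
  assumes "finite S" "Poly_Mapping.keys p \<subseteq> S"
  shows "eval_subst \<sigma> p = (\<Sum>m\<in>S. Const (Poly_Mapping.lookup p m) * monom_subst \<sigma> m)"
  unfolding eval_subst_monom
  by (rule sum.mono_neutral_left) (use assms in \<open>auto simp: in_keys_iff\<close>)

lemma eval_subst_0 [simp]: "eval_subst \<sigma> 0 = 0"
  by (simp add: eval_subst_def)

lemma eval_subst_add: "eval_subst \<sigma> (p + q) = eval_subst \<sigma> p + eval_subst \<sigma> q"
proof -
  let ?S = "Poly_Mapping.keys p \<union> Poly_Mapping.keys q"
  have "eval_subst \<sigma> (p + q) = (\<Sum>m\<in>?S. Const (Poly_Mapping.lookup (p + q) m) * monom_subst \<sigma> m)"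
    by (rule eval_subst_superset) (simp_all add: keys_add)
  also have "\<dots> = eval_subst \<sigma> p + eval_subst \<sigma> q"
    by (simp add: eval_subst_superset[of ?S] lookup_add Const_add distrib_right sum.distrib)
  finally show ?thesis .
qed

lemma eval_subst_single: "eval_subst \<sigma> (Poly_Mapping.single m c) = Const c * monom_subst \<sigma> m"
  by (subst eval_subst_superset[of "{m}"]) auto

lemma eval_subst_sum: "eval_subst \<sigma> (sum f A) = (\<Sum>a\<in>A. eval_subst \<sigma> (f a))"
  by (induction A rule: infinite_finite_induct) (auto simp: eval_subst_add)

lemma eval_subst_mult: "eval_subst \<sigma> (p * q) = eval_subst \<sigma> p * eval_subst \<sigma> q"
proof -
  let ?sg = "\<lambda>p m. Poly_Mapping.single m (Poly_Mapping.lookup p m)"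
  have "p * q = (\<Sum>m\<in>Poly_Mapping.keys p. ?sg p m) * (\<Sum>n\<in>Poly_Mapping.keys q. ?sg q n)"
    using poly_mapping_sum_single[of p] poly_mapping_sum_single[of q] by simp
  also have "\<dots> = (\<Sum>m\<in>Poly_Mapping.keys p. \<Sum>n\<in>Poly_Mapping.keys q.
      Poly_Mapping.single (m + n) (Poly_Mapping.lookup p m * Poly_Mapping.lookup q n))"
    by (simp add: sum_product mult_single)
  finally have "eval_subst \<sigma> (p * q) = (\<Sum>m\<in>Poly_Mapping.keys p. \<Sum>n\<in>Poly_Mapping.keys q.
      (Const (Poly_Mapping.lookup p m) * monom_subst \<sigma> m) * (Const (Poly_Mapping.lookup q n) * monom_subst \<sigma> n))"
    by (simp add: eval_subst_sum eval_subst_single Const_mult monom_subst_add mult_ac)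
  also have "\<dots> = eval_subst \<sigma> p * eval_subst \<sigma> q"
    by (simp add: sum_product eval_subst_monom)
  finally show ?thesis .
qed

lemma eval_subst_1 [simp]: "eval_subst \<sigma> 1 = 1"
  using eval_subst_single[of \<sigma> 0 1] by (simp add: monom_subst_def)

lemma eval_subst_Const [simp]: "eval_subst \<sigma> (Const c) = Const c"
  using eval_subst_single[of \<sigma> 0 c] by (simp add: Const_def monom_subst_def)

lemma eval_subst_Var [simp]: "eval_subst \<sigma> (Var i) = \<sigma> i"
  by (simp add: Var_def eval_subst_single monom_subst_def)

lemma eval_subst_power: "eval_subst \<sigma> (p ^ k) = eval_subst \<sigma> p ^ k"
  by (induction k) (auto simp: eval_subst_mult)

lemma Var_power: "Var i ^ k = Poly_Mapping.single (Poly_Mapping.single i k) 1"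
  by (induction k) (auto simp: Var_def mult_single single_add[symmetric] add.commute)

lemma monom_subst_Var: "monom_subst Var m = Poly_Mapping.single m 1"
proof -
  have "(\<Prod>i\<in>A. Var i ^ Poly_Mapping.lookup m i)
      = Poly_Mapping.single (\<Sum>i\<in>A. Poly_Mapping.single i (Poly_Mapping.lookup m i)) 1"
    if "finite A" for A
    using that by (induction A rule: finite_induct) (auto simp: Var_power mult_single)
  then show ?thesis
    unfolding monom_subst_def using poly_mapping_sum_single[of m] by simp
qed

lemma poly_sum_monom: "p = (\<Sum>m\<in>Poly_Mapping.keys p. Const (Poly_Mapping.lookup p m) * monom_subst Var m)"
  by (subst poly_mapping_sum_single) (simp add: monom_subst_Var Const_mult_single)

lemma eval_subst_unique:
  assumes add: "\<And>p q. h (p + q) = h p + h q"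
    and mult: "\<And>p q. h (p * q) = h p * h q"
    and Const: "\<And>c. h (Const c) = Const c"
  shows "h p = eval_subst (\<lambda>i. h (Var i)) p"
proof -
  have h0: "h 0 = 0" and h1: "h 1 = 1"
    using Const[of 0] Const[of 1] by simp_all
  have h_sum: "h (sum f A) = (\<Sum>a\<in>A. h (f a))" for f and A :: "'x set"
    by (induction A rule: infinite_finite_induct) (auto simp: h0 add)
  have h_prod: "h (prod f A) = (\<Prod>a\<in>A. h (f a))" for f and A :: "'x set"
    by (induction A rule: infinite_finite_induct) (auto simp: h1 mult)
  have h_power: "h (x ^ k) = h x ^ k" for x k
    by (induction k) (auto simp: h1 mult)
  have "h p = h (\<Sum>m\<in>Poly_Mapping.keys p. Const (Poly_Mapping.lookup p m) * monom_subst Var m)"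
    by (subst poly_sum_monom) (rule refl)
  also have "\<dots> = eval_subst (\<lambda>i. h (Var i)) p"
    by (simp add: h_sum mult Const monom_subst_def h_prod h_power eval_subst_monom)
  finally show ?thesis .
qed

lemma eval_subst_Var_id [simp]: "eval_subst Var p = p"
  using eval_subst_unique[of "\<lambda>p. p" p] by simp

definition subst_comp :: "(nat \<Rightarrow> mpoly) \<Rightarrow> (nat \<Rightarrow> mpoly) \<Rightarrow> nat \<Rightarrow> mpoly" where
  "subst_comp \<sigma> \<tau> = (\<lambda>i. eval_subst \<tau> (\<sigma> i))"

lemma eval_subst_comp: "eval_subst (subst_comp \<sigma> \<tau>) p = eval_subst \<tau> (eval_subst \<sigma> p)"
  using eval_subst_unique[of "\<lambda>p. eval_subst \<tau> (eval_subst \<sigma> p)" p]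
  by (simp add: eval_subst_add eval_subst_mult subst_comp_def)

lemma mpoly_power2_eq_subst: "p ^ 2 = eval_subst (\<lambda>i. Var i ^ 2) p"
  using eval_subst_unique[of "\<lambda>p. p ^ 2" p]
  by (simp add: mpoly_power2_add power_mult_distrib)


definition polys_on :: "nat set \<Rightarrow> mpoly \<Rightarrow> bool" where
  "polys_on V p \<longleftrightarrow> (\<forall>m\<in>Poly_Mapping.keys p. Poly_Mapping.keys m \<subseteq> V)"

lemma polys_in_iff_polys_on: "p \<in> polys_in n \<longleftrightarrow> polys_on {..<n} p"
  by (simp add: polys_in_def polys_on_def)

lemma polys_on_0 [simp]: "polys_on V 0"
  by (simp add: polys_on_def)

lemma polys_on_Const [simp]: "polys_on V (Const c)"
  by (simp add: polys_on_def Const_def)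

lemma polys_on_1 [simp]: "polys_on V 1"
  using polys_on_Const[of V 1] by simp

lemma polys_on_Var [simp]: "polys_on V (Var i) \<longleftrightarrow> i \<in> V"
  by (simp add: polys_on_def Var_def)

lemma polys_on_add [intro]: "polys_on V p \<Longrightarrow> polys_on V q \<Longrightarrow> polys_on V (p + q)"
  unfolding polys_on_def by (meson Un_iff keys_add subsetD)

lemma polys_on_mult [intro]:
  assumes "polys_on V p" "polys_on V q"
  shows "polys_on V (p * q)"
  unfolding polys_on_def
proof
  fix m assume "m \<in> Poly_Mapping.keys (p * q)"
  then obtain a b where "m = a + b" "a \<in> Poly_Mapping.keys p" "b \<in> Poly_Mapping.keys q"
    using keys_mult[of p q] by blast
  then show "Poly_Mapping.keys m \<subseteq> V"
    using assms keys_add[of a b] unfolding polys_on_def by blast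
qed

lemma polys_on_sum [intro]: "(\<And>a. a \<in> A \<Longrightarrow> polys_on V (f a)) \<Longrightarrow> polys_on V (sum f A)"
  by (induction A rule: infinite_finite_induct) auto

lemma polys_on_prod [intro]: "(\<And>a. a \<in> A \<Longrightarrow> polys_on V (f a)) \<Longrightarrow> polys_on V (prod f A)"
  by (induction A rule: infinite_finite_induct) auto

lemma polys_on_power [intro]: "polys_on V p \<Longrightarrow> polys_on V (p ^ k)"
  by (induction k) auto

lemma polys_on_mono: "polys_on V p \<Longrightarrow> V \<subseteq> W \<Longrightarrow> polys_on W p"
  unfolding polys_on_def by blast

lemma polys_on_eval_subst:
  assumes "polys_on V p" "\<And>i. i \<in> V \<Longrightarrow> polys_on W (\<sigma> i)"
  shows "polys_on W (eval_subst \<sigma> p)"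
  unfolding eval_subst_def
proof (intro polys_on_sum polys_on_mult polys_on_prod polys_on_power)
  fix m i assume "m \<in> Poly_Mapping.keys p" "i \<in> Poly_Mapping.keys m"
  then show "polys_on W (\<sigma> i)" using assms unfolding polys_on_def by blast
qed simp

lemma eval_subst_cong_on:
  assumes "polys_on V p" "\<And>i. i \<in> V \<Longrightarrow> \<sigma> i = \<tau> i"
  shows "eval_subst \<sigma> p = eval_subst \<tau> p"
  using assms unfolding eval_subst_def polys_on_def
  by (intro sum.cong arg_cong2[where f = "(*)"] prod.cong) (auto 0 3)

lemma eval_subst_id_on:
  assumes "polys_on V p" "\<And>i. i \<in> V \<Longrightarrow> \<sigma> i = Var i"
  shows "eval_subst \<sigma> p = p"
  using eval_subst_cong_on[OF assms] by simp

lemma eval_subst_fixed: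
  assumes "polys_on V r" "\<And>i. i \<in> V \<Longrightarrow> eval_subst \<tau> (\<sigma> i) = \<sigma> i"
  shows "eval_subst \<tau> (eval_subst \<sigma> r) = eval_subst \<sigma> r"
  unfolding eval_subst_comp[symmetric]
  by (rule eval_subst_cong_on[OF assms(1)]) (simp add: subst_comp_def assms(2))

lemma tdeg_superset:
  assumes "finite S" "Poly_Mapping.keys m \<subseteq> S"
  shows "tdeg m = (\<Sum>i\<in>S. Poly_Mapping.lookup m i)"
  unfolding tdeg_def
  by (rule sum.mono_neutral_left) (use assms in \<open>auto simp: in_keys_iff\<close>)

lemma tdeg_add: "tdeg (m + n) = tdeg m + tdeg n"
  using tdeg_superset[of "Poly_Mapping.keys m \<union> Poly_Mapping.keys n"]
  by (simp add: keys_add lookup_add sum.distrib)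

lemma lookup_le_tdeg: "Poly_Mapping.lookup m i \<le> tdeg m"
  unfolding tdeg_def
  by (metis finite_keys in_keys_iff member_le_sum zero_le)

lemma tdeg_remove:
  "(\<Sum>l\<in>Poly_Mapping.keys m - {i}. Poly_Mapping.lookup m l) = tdeg m - Poly_Mapping.lookup m i"
  by (cases "i \<in> Poly_Mapping.keys m") (auto simp: tdeg_def in_keys_iff sum.remove)

definition deg_le :: "nat \<Rightarrow> mpoly \<Rightarrow> bool" where
  "deg_le N p \<longleftrightarrow> (\<forall>m\<in>Poly_Mapping.keys p. tdeg m \<le> N)"

lemma deg_le_0 [simp]: "deg_le N 0"
  by (simp add: deg_le_def)

lemma deg_le_Const [simp]: "deg_le N (Const c)"
  by (simp add: deg_le_def Const_def tdeg_def)

lemma deg_le_1 [simp]: "deg_le N 1"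
  using deg_le_Const[of N 1] by simp

lemma deg_le_Var: "1 \<le> N \<Longrightarrow> deg_le N (Var i)"
  by (simp add: deg_le_def Var_def tdeg_def)

lemma deg_le_mono: "deg_le N p \<Longrightarrow> N \<le> M \<Longrightarrow> deg_le M p"
  unfolding deg_le_def by force

lemma deg_le_add [intro]: "deg_le N p \<Longrightarrow> deg_le N q \<Longrightarrow> deg_le N (p + q)"
  unfolding deg_le_def by (meson Un_iff keys_add subsetD)

lemma deg_le_mult: "deg_le N p \<Longrightarrow> deg_le M q \<Longrightarrow> deg_le (N + M) (p * q)"
  unfolding deg_le_def using keys_mult[of p q] by (force simp: tdeg_add intro: add_mono)

lemma deg_le_sum [intro]: "(\<And>a. a \<in> A \<Longrightarrow> deg_le N (f a)) \<Longrightarrow> deg_le N (sum f A)"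
  by (induction A rule: infinite_finite_induct) auto

lemma deg_le_power: "deg_le N p \<Longrightarrow> deg_le (k * N) (p ^ k)"
  by (induction k) (auto dest: deg_le_mult)

lemma deg_le_prod:
  "(\<And>a. a \<in> A \<Longrightarrow> deg_le (d a) (f a)) \<Longrightarrow> deg_le (sum d A) (prod f A)"
  by (induction A rule: infinite_finite_induct) (auto intro: deg_le_mult)

lemma deg_le_exists: "\<exists>N. deg_le N p"
  by (rule exI[of _ "Max (tdeg ` Poly_Mapping.keys p)"]) (simp add: deg_le_def)

lemma deg_le_eval_subst:
  assumes "deg_le N p" "\<And>i. deg_le 1 (\<sigma> i)"
  shows "deg_le N (eval_subst \<sigma> p)"
  unfolding eval_subst_monom
proof (rule deg_le_sum)
  fix m assume m: "m \<in> Poly_Mapping.keys p"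
  have "deg_le (tdeg m) (monom_subst \<sigma> m)"
    unfolding monom_subst_def tdeg_def
    by (rule deg_le_prod) (use assms(2) deg_le_power in fastforce)
  then have "deg_le (0 + tdeg m) (Const (Poly_Mapping.lookup p m) * monom_subst \<sigma> m)"
    by (intro deg_le_mult) simp_all
  then show "deg_le N (Const (Poly_Mapping.lookup p m) * monom_subst \<sigma> m)"
    using assms(1) m unfolding deg_le_def by force
qed

lemma deg_le_restrict: "deg_le N p \<Longrightarrow> deg_le N (eval_subst (Var(r := 0)) p)"
  by (rule deg_le_eval_subst) (auto intro: deg_le_Var)

lemma homogeneous_add: "homogeneous d p \<Longrightarrow> homogeneous d q \<Longrightarrow> homogeneous d (p + q)"
  unfolding homogeneous_def by (meson Un_iff keys_add subsetD)

lemma homogeneous_mult: "homogeneous d p \<Longrightarrow> homogeneous e q \<Longrightarrow> homogeneous (d + e) (p * q)"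
  unfolding homogeneous_def using keys_mult[of p q] by (force simp: tdeg_add)


section \<open>Division by linear forms\<close>

lemma deg_le_power_diff_quotient:
  assumes "deg_le 1 q"
  shows "deg_le (k - 1) (\<Sum>j<k. q ^ (k - Suc j) * Var i ^ j)"
proof (rule deg_le_sum)
  fix j assume "j \<in> {..<k}"
  then have "k - Suc j + j = k - 1" by auto
  moreover have "deg_le ((k - Suc j) * 1 + j * 1) (q ^ (k - Suc j) * Var i ^ j)"
    by (intro deg_le_mult deg_le_power assms deg_le_Var) simp
  ultimately show "deg_le (k - 1) (q ^ (k - Suc j) * Var i ^ j)" by simp
qed

lemma deg_le_prod_Var:
  "deg_le (tdeg m - Poly_Mapping.lookup m i)
     (\<Prod>l\<in>Poly_Mapping.keys m - {i}. Var l ^ Poly_Mapping.lookup m l)"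
  using deg_le_prod[of "Poly_Mapping.keys m - {i}" "Poly_Mapping.lookup m" "\<lambda>l. Var l ^ Poly_Mapping.lookup m l"]
  by (simp add: tdeg_remove deg_le_Var deg_le_power[of 1, simplified])

lemma factor_linear:
  assumes dp: "deg_le N p" and dq: "deg_le 1 q" and pV: "polys_on V p" and qV: "polys_on V q"
    and iV: "i \<in> V"
  obtains D where "p = eval_subst (Var(i := q)) p + (Var i + q) * D"
    and "deg_le (N - 1) D" and "D \<noteq> 0 \<longrightarrow> N \<noteq> 0" and "polys_on V D"
proof -
  let ?lk = "Poly_Mapping.lookup" and ?ks = "Poly_Mapping.keys"
  define G where "G k = (\<Sum>j<k. q ^ (k - Suc j) * Var i ^ j)" for k
  define R where "R m = (\<Prod>l\<in>?ks m - {i}. Var l ^ ?lk m l)" for m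
  define D where "D = (\<Sum>m\<in>?ks p. Const (?lk p m) * G (?lk m i) * R m)"
  have G: "Var i ^ k + q ^ k = (Var i + q) * G k" for k
    using power_diff_sumr2[of "Var i" k q] by (simp add: G_def)
  have monom_q: "monom_subst (Var(i := q)) m = q ^ ?lk m i * R m" for m
    unfolding monom_subst_split[of _ m i] R_def by (auto intro!: prod.cong)
  have monom_Var: "monom_subst Var m = Var i ^ ?lk m i * R m" for m
    unfolding monom_subst_split[of _ m i] R_def by simp
  have "p + eval_subst (Var(i := q)) p
      = (\<Sum>m\<in>?ks p. Const (?lk p m) * (Var i ^ ?lk m i + q ^ ?lk m i) * R m)"
    by (subst (1) poly_sum_monom, subst eval_subst_monom)
       (simp add: monom_q monom_Var sum.distrib[symmetric] algebra_simps)
  also have "\<dots> = (Var i + q) * D"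
    by (simp add: D_def G sum_distrib_left mult_ac)
  finally have "p = eval_subst (Var(i := q)) p + (Var i + q) * D"
    by (simp add: mpoly_add_eq_iff)
  moreover have "deg_le (N - 1) D"
    unfolding D_def
  proof (rule deg_le_sum)
    fix m assume m: "m \<in> ?ks p"
    have "deg_le (0 + (?lk m i - 1) + (tdeg m - ?lk m i)) (Const (?lk p m) * G (?lk m i) * R m)"
      unfolding G_def R_def by (intro deg_le_mult deg_le_power_diff_quotient[OF dq] deg_le_prod_Var) simp
    moreover have "tdeg m \<le> N"
      using dp m by (auto simp: deg_le_def)
    ultimately show "deg_le (N - 1) (Const (?lk p m) * G (?lk m i) * R m)"
      using lookup_le_tdeg[of m i] by (cases "?lk m i") (auto simp: G_def elim!: deg_le_mono)
  qed
  moreover have "D \<noteq> 0 \<longrightarrow> N \<noteq> 0"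
  proof (rule impI, erule contrapos_pp)
    assume "\<not> N \<noteq> 0"
    then have "?lk m i = 0" if "m \<in> ?ks p" for m
      using that dp lookup_le_tdeg[of m i] by (auto simp: deg_le_def)
    then show "\<not> D \<noteq> 0" by (simp add: D_def G_def)
  qed
  moreover have "polys_on V D"
    unfolding D_def G_def R_def
  proof (intro polys_on_sum polys_on_mult polys_on_prod polys_on_power)
    fix m l assume "m \<in> ?ks p" "l \<in> ?ks m - {i}"
    then have "l \<in> V" using pV by (auto simp: polys_on_def)
    then show "polys_on V (Var l)" by simp
  qed (use qV iV in auto)
  ultimately show ?thesis using that by blast
qed

lemma factor_vanishing:
  assumes "eval_subst (Var(i := q)) p = 0"
    and "deg_le N p" "deg_le 1 q" "polys_on V p" "polys_on V q" "i \<in> V"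
  obtains D where "p = (Var i + q) * D"
    and "deg_le (N - 1) D" and "D \<noteq> 0 \<longrightarrow> N \<noteq> 0" and "polys_on V D"
  using factor_linear[OF assms(2-)] assms(1) by (metis add_0)

lemma restriction_decomp: "\<exists>D. p = eval_subst (Var(i := 0)) p + Var i * D"
proof -
  obtain N where "deg_le N p"
    using deg_le_exists by blast
  from factor_linear[OF this deg_le_0, of UNIV i] show ?thesis
    by (metis UNIV_I add_0_right polys_on_def subset_UNIV)
qed

lemma product_linear_factors:
  assumes "polys_on V h" "deg_le N h"
    and "\<And>i q. (i, q) \<in> set hs \<Longrightarrow>
      i \<in> V \<and> polys_on V q \<and> deg_le 1 q \<and> eval_subst (Var(i := q)) h = 0"
    and "sorted_wrt (\<lambda>(i, q) (j, r). eval_subst (Var(j := r)) (Var i + q) \<noteq> 0) hs"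
  shows "\<exists>h'. h = (\<Prod>(i, q)\<leftarrow>hs. Var i + q) * h' \<and> polys_on V h'
    \<and> deg_le (N - length hs) h' \<and> (h' \<noteq> 0 \<longrightarrow> length hs \<le> N)"
  using assms
proof (induction hs arbitrary: h N)
  case Nil
  then show ?case by simp
next
  case (Cons iq hs)
  obtain i q where iq: "iq = (i, q)" by fastforce
  have "i \<in> V \<and> polys_on V q \<and> deg_le 1 q \<and> eval_subst (Var(i := q)) h = 0"
    by (rule Cons.prems(3)) (simp add: iq)
  then have hyp: "i \<in> V" "polys_on V q" "deg_le 1 q" "eval_subst (Var(i := q)) h = 0"
    by blast+
  obtain D where h_eq: "h = (Var i + q) * D"
    and D: "deg_le (N - 1) D" "D \<noteq> 0 \<longrightarrow> N \<noteq> 0" "polys_on V D"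
    by (rule factor_vanishing[OF hyp(4) Cons.prems(2) hyp(3) Cons.prems(1) hyp(2,1)])
  have first_nonvanishing: "eval_subst (Var(j := r)) (Var i + q) \<noteq> 0"
    if "(j, r) \<in> set hs" for j r
  proof -
    have "(\<lambda>(i, q) (j, r). eval_subst (Var(j := r)) (Var i + q) \<noteq> 0) iq (j, r)"
      using Cons.prems(4)[unfolded sorted_wrt.simps(2)] that by blast
    then show ?thesis by (simp only: iq prod.case not_False_eq_True)
  qed
  have "j \<in> V \<and> polys_on V r \<and> deg_le 1 r \<and> eval_subst (Var(j := r)) D = 0"
    if jr: "(j, r) \<in> set hs" for j r
  proof -
    have "j \<in> V \<and> polys_on V r \<and> deg_le 1 r \<and> eval_subst (Var(j := r)) h = 0"
      by (rule Cons.prems(3)) (simp add: jr)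
    with first_nonvanishing[OF jr] show ?thesis
      unfolding h_eq eval_subst_mult by simp
  qed
  moreover have "sorted_wrt (\<lambda>(i, q) (j, r). eval_subst (Var(j := r)) (Var i + q) \<noteq> 0) hs"
    using Cons.prems(4) by (simp only: sorted_wrt.simps(2))
  ultimately obtain h' where h': "D = (\<Prod>(i, q)\<leftarrow>hs. Var i + q) * h'" "polys_on V h'"
      "deg_le (N - 1 - length hs) h'" "h' \<noteq> 0 \<longrightarrow> length hs \<le> N - 1"
    using Cons.IH[OF D(3,1)] by blast
  show ?case
  proof (cases "D = 0")
    case True
    then show ?thesis using h_eq by (intro exI[of _ 0]) simp
  next
    case False
    then have "h = (\<Prod>(i, q)\<leftarrow>iq # hs. Var i + q) * h' \<and> (h' \<noteq> 0 \<longrightarrow> length (iq # hs) \<le> N)"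
      using h_eq h'(1,4) D(2) by (auto simp: iq mult.assoc)
    then show ?thesis
      using h'(2,3) by (auto simp: diff_diff_add)
  qed
qed

lemma restriction_eq_0_transfer:
  assumes "eval_subst (Var(r := 0)) h = 0" and "eval_subst W h = h" and "eval_subst P (W r) = 0"
  shows "eval_subst P h = 0"
proof -
  have "subst_comp W P = subst_comp (Var(r := 0)) (subst_comp W P)"
    using assms(3) by (auto simp: fun_eq_iff subst_comp_def)
  then have "eval_subst P (eval_subst W h) = eval_subst (subst_comp W P) (eval_subst (Var(r := 0)) h)"
    by (metis eval_subst_comp)
  then show ?thesis using assms(1,2) by simp
qed

definition subst_word :: "(nat \<Rightarrow> mpoly) list \<Rightarrow> nat \<Rightarrow> mpoly" where
  "subst_word ws = foldr subst_comp ws Var"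

lemma eval_subst_word_fixed:
  assumes "\<And>\<sigma>. \<sigma> \<in> set ws \<Longrightarrow> eval_subst \<sigma> p = p"
  shows "eval_subst (subst_word ws) p = p"
  using assms
  by (induction ws) (simp_all add: subst_word_def eval_subst_comp[of _ "foldr subst_comp _ Var"])

lemma eval_subst_fixed_by_word:
  assumes "polys_on V p" and "\<And>\<sigma>. \<sigma> \<in> set ws \<Longrightarrow> eval_subst \<sigma> p = p"
    and "\<And>i. i \<in> V \<Longrightarrow> subst_word ws i = \<tau> i"
  shows "eval_subst \<tau> p = p"
proof -
  have "eval_subst \<tau> p = eval_subst (subst_word ws) p"
    by (rule eval_subst_cong_on[OF assms(1)]) (simp add: assms(3))
  also have "\<dots> = p"
    by (rule eval_subst_word_fixed) (rule assms(2))
  finally show ?thesis .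
qed


section \<open>Transvections and squares\<close>

definition transvection :: "nat \<Rightarrow> nat \<Rightarrow> nat \<Rightarrow> mpoly" where
  "transvection i j = Var(i := Var i + Var j)"

lemma power_add_first_order:
  fixes x y :: "'a::comm_ring_1"
  shows "\<exists>B. (x + y) ^ k = x ^ k + of_nat k * x ^ (k - 1) * y + y^2 * B"
proof (induction k)
  case 0
  show ?case by (rule exI[of _ 0]) simp
next
  case (Suc k)
  then obtain B where B: "(x + y) ^ k = x ^ k + of_nat k * x ^ (k - 1) * y + y^2 * B"
    by blast
  show ?case
  proof (cases k)
    case 0
    then show ?thesis by (intro exI[of _ 0]) simp
  next
    case (Suc k')
    have "(x + y) ^ Suc k = (x + y) * (x ^ k' * x + of_nat k * x ^ k' * y + y^2 * B)"
      using B Suc by (simp add: mult.commute)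
    also have "\<dots> = x ^ Suc k + of_nat (Suc k) * x ^ (Suc k - 1) * y
                   + y^2 * (x * B + of_nat k * x ^ k' + y * B)"
      using Suc by (simp add: algebra_simps power2_eq_square)
    finally show ?thesis by blast
  qed
qed

lemma of_nat_bit: "(of_nat n :: bit) = (if even n then 0 else 1)"
  by (induction n) (auto simp: add_bit_eq_xor)

definition pderiv_var :: "nat \<Rightarrow> mpoly \<Rightarrow> mpoly" where
  "pderiv_var j p = (\<Sum>m\<in>Poly_Mapping.keys p.
     Poly_Mapping.single (m - Poly_Mapping.single j 1) (Poly_Mapping.lookup p m * of_nat (Poly_Mapping.lookup m j)))"

lemma lookup_minus_single [simp]:
  "Poly_Mapping.lookup ((m::mono) - Poly_Mapping.single j k) l = Poly_Mapping.lookup m l - (if l = j then k else 0)"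
  by (simp add: lookup_minus lookup_single)

lemma keys_minus_single_1: "Poly_Mapping.keys ((m::mono) - Poly_Mapping.single j 1) \<subseteq> Poly_Mapping.keys m"
  by (auto simp: in_keys_iff split: if_splits)

lemma monom_Var_minus_single:
  assumes "Poly_Mapping.lookup m j \<noteq> 0"
  shows "Var j ^ (Poly_Mapping.lookup m j - 1) * (\<Prod>l\<in>Poly_Mapping.keys m - {j}. Var l ^ Poly_Mapping.lookup m l)
    = Poly_Mapping.single (m - Poly_Mapping.single j 1) 1"
proof -
  let ?m' = "m - Poly_Mapping.single j 1"
  have keys: "Poly_Mapping.keys ?m' - {j} = Poly_Mapping.keys m - {j}"
    by (auto simp: in_keys_iff)
  have "Poly_Mapping.single ?m' 1 = monom_subst Var ?m'"
    by (simp add: monom_subst_Var)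
  also have "\<dots> = Var j ^ (Poly_Mapping.lookup m j - 1)
      * (\<Prod>l\<in>Poly_Mapping.keys m - {j}. Var l ^ Poly_Mapping.lookup m l)"
    unfolding monom_subst_split[of _ _ j] keys by (auto intro!: prod.cong)
  finally show ?thesis by simp
qed

lemma transvection_taylor:
  assumes "j \<noteq> r"
  shows "\<exists>R. eval_subst (transvection j r) p = p + Var r * pderiv_var j p + Var r ^ 2 * R"
proof -
  let ?lk = "Poly_Mapping.lookup" and ?ks = "Poly_Mapping.keys"
  obtain B where B: "\<And>k. (Var j + Var r) ^ k = Var j ^ k + of_nat k * Var j ^ (k - 1) * Var r + Var r ^ 2 * B k"
    using power_add_first_order[of "Var j" "Var r"] by metis
  define R where "R m = (\<Prod>l\<in>?ks m - {j}. Var l ^ ?lk m l)" for m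
  have monom_transv: "monom_subst (transvection j r) m = (Var j + Var r) ^ ?lk m j * R m" for m
    unfolding monom_subst_split[of _ m j] R_def transvection_def using assms
    by (auto intro!: prod.cong)
  have monom_Var: "Poly_Mapping.single m 1 = Var j ^ ?lk m j * R m" for m
    using monom_subst_split[of Var m j] by (simp add: monom_subst_Var R_def)
  have deriv_term: "Const c * (of_nat (?lk m j) * Var j ^ (?lk m j - 1)) * R m
      = Poly_Mapping.single (m - Poly_Mapping.single j 1) (c * of_nat (?lk m j))" for c m
  proof (cases "?lk m j = 0")
    case False
    then have "Const c * (of_nat (?lk m j) * Var j ^ (?lk m j - 1)) * R m
        = Const c * of_nat (?lk m j) * Poly_Mapping.single (m - Poly_Mapping.single j 1) 1"
      using monom_Var_minus_single by (simp add: R_def mult_ac)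
    then show ?thesis
      by (simp add: Const_def mult_single flip: single_of_nat)
  qed simp
  have monom: "eval_subst (transvection j r) (Poly_Mapping.single m c)
      = Poly_Mapping.single m c + Var r * Poly_Mapping.single (m - Poly_Mapping.single j 1) (c * of_nat (?lk m j))
        + Var r ^ 2 * (Const c * B (?lk m j) * R m)" for m c
  proof -
    have "eval_subst (transvection j r) (Poly_Mapping.single m c) = Const c * ((Var j + Var r) ^ ?lk m j * R m)"
      by (simp add: eval_subst_single monom_transv)
    also have "\<dots> = Const c * (Var j ^ ?lk m j * R m)
        + Var r * (Const c * (of_nat (?lk m j) * Var j ^ (?lk m j - 1)) * R m)
        + Var r ^ 2 * (Const c * B (?lk m j) * R m)"
      unfolding B by (simp add: algebra_simps)
    finally show ?thesis
      unfolding deriv_term monom_Var[symmetric] Const_mult_single by simp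
  qed
  have "eval_subst (transvection j r) p = (\<Sum>m\<in>?ks p. eval_subst (transvection j r) (Poly_Mapping.single m (?lk p m)))"
    by (subst (1) poly_mapping_sum_single) (rule eval_subst_sum)
  also have "\<dots> = p + Var r * pderiv_var j p + Var r ^ 2 * (\<Sum>m\<in>?ks p. Const (?lk p m) * B (?lk m j) * R m)"
    by (subst (4) poly_mapping_sum_single) (simp add: monom sum.distrib sum_distrib_left pderiv_var_def)
  finally show ?thesis by blast
qed

lemma pderiv_var_eq_0_imp_even:
  assumes "pderiv_var j p = 0" and m: "m \<in> Poly_Mapping.keys p"
  shows "even (Poly_Mapping.lookup m j)"
proof (rule ccontr)
  let ?lk = "Poly_Mapping.lookup" and ?m1 = "\<lambda>m. m - Poly_Mapping.single j 1"
  assume odd: "odd (?lk m j)"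
  let ?f = "\<lambda>m'. ?lk (Poly_Mapping.single (?m1 m') (?lk p m' * of_nat (?lk m' j))) (?m1 m)"
  have others: "?f m' = 0" if "m' \<in> Poly_Mapping.keys p - {m}" for m'
  proof (cases "?lk m' j = 0")
    case False
    have "?m1 m' \<noteq> ?m1 m"
    proof
      assume eq: "?m1 m' = ?m1 m"
      have "?lk m' l = ?lk m l" for l
        using arg_cong[OF eq, of "\<lambda>n. ?lk n l"] False odd
        by (auto split: if_splits elim: oddE)
      then show False using that by (auto intro: poly_mapping_eqI)
    qed
    then show ?thesis by (simp add: lookup_single)
  qed simp
  have "?lk (pderiv_var j p) (?m1 m) = (\<Sum>m'\<in>Poly_Mapping.keys p. ?f m')"
    by (simp add: pderiv_var_def lookup_sum)
  also have "\<dots> = ?f m + (\<Sum>m'\<in>Poly_Mapping.keys p - {m}. ?f m')"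
    using m by (simp add: sum.remove)
  also have "\<dots> = 1"
    using m odd others by (simp add: of_nat_bit in_keys_iff bit_not_zero_iff)
  finally show False using assms(1) by simp
qed

lemma polys_on_pderiv_var:
  assumes "polys_on V p"
  shows "polys_on V (pderiv_var j p)"
  unfolding pderiv_var_def
proof (intro polys_on_sum)
  fix m assume "m \<in> Poly_Mapping.keys p"
  then show "polys_on V (Poly_Mapping.single (m - Poly_Mapping.single j 1)
      (Poly_Mapping.lookup p m * of_nat (Poly_Mapping.lookup m j)))"
    using assms keys_minus_single_1[of m j] by (auto simp: polys_on_def)
qed

definition half_mono :: "mono \<Rightarrow> mono" where
  "half_mono m = Poly_Mapping.map (\<lambda>k. k div 2) m"

lemma lookup_half_mono: "Poly_Mapping.lookup (half_mono m) l = Poly_Mapping.lookup m l div 2"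
  by (simp add: half_mono_def Poly_Mapping.map.rep_eq when_def)

lemma half_mono_double:
  assumes "\<And>l. even (Poly_Mapping.lookup m l)"
  shows "half_mono m + half_mono m = m"
proof (rule poly_mapping_eqI)
  fix l
  show "Poly_Mapping.lookup (half_mono m + half_mono m) l = Poly_Mapping.lookup m l"
    using assms[of l] by (auto simp: lookup_add lookup_half_mono elim!: evenE)
qed

definition poly_sqrt :: "mpoly \<Rightarrow> mpoly" where
  "poly_sqrt p = (\<Sum>m\<in>Poly_Mapping.keys p. Poly_Mapping.single (half_mono m) (Poly_Mapping.lookup p m))"

lemma keys_poly_sqrt:
  assumes "n \<in> Poly_Mapping.keys (poly_sqrt p)"
  obtains m where "m \<in> Poly_Mapping.keys p" and "n = half_mono m"
proof -
  from assms obtain m where "m \<in> Poly_Mapping.keys p"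
      "n \<in> Poly_Mapping.keys (Poly_Mapping.single (half_mono m) (Poly_Mapping.lookup p m))"
    using subsetD[OF keys_sum, of n] unfolding poly_sqrt_def by blast
  then show ?thesis using that by (simp split: if_splits)
qed

lemma poly_sqrt_power2:
  assumes "\<And>m l. m \<in> Poly_Mapping.keys p \<Longrightarrow> even (Poly_Mapping.lookup m l)"
  shows "poly_sqrt p ^ 2 = p"
proof -
  have "Poly_Mapping.single (half_mono m) c ^ 2 = Poly_Mapping.single m c"
    if "m \<in> Poly_Mapping.keys p" for m and c :: bit
    using half_mono_double[OF assms[OF that]] by (simp add: power2_eq_square mult_single)
  then show ?thesis
    unfolding poly_sqrt_def mpoly_power2_sum using poly_mapping_sum_single[of p] by simp
qed

lemma polys_on_poly_sqrt:
  assumes "polys_on V p"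
  shows "polys_on V (poly_sqrt p)"
  unfolding polys_on_def
proof
  fix n assume "n \<in> Poly_Mapping.keys (poly_sqrt p)"
  then obtain m where "m \<in> Poly_Mapping.keys p" "n = half_mono m"
    by (rule keys_poly_sqrt)
  moreover have "Poly_Mapping.keys (half_mono m) \<subseteq> Poly_Mapping.keys m"
    by (auto simp: in_keys_iff lookup_half_mono)
  ultimately show "Poly_Mapping.keys n \<subseteq> V"
    using assms unfolding polys_on_def by blast
qed

lemma deg_le_poly_sqrt:
  assumes "deg_le N p" and "\<And>m l. m \<in> Poly_Mapping.keys p \<Longrightarrow> even (Poly_Mapping.lookup m l)"
  shows "deg_le (N div 2) (poly_sqrt p)"
  unfolding deg_le_def
proof
  fix n assume "n \<in> Poly_Mapping.keys (poly_sqrt p)"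
  then obtain m where m: "m \<in> Poly_Mapping.keys p" "n = half_mono m"
    by (rule keys_poly_sqrt)
  then have "tdeg n + tdeg n = tdeg m"
    using half_mono_double[OF assms(2)[OF m(1)]] by (metis tdeg_add)
  moreover have "tdeg m \<le> N"
    using assms(1) m unfolding deg_le_def by blast
  ultimately show "tdeg n \<le> N div 2" by linarith
qed


lemma mpoly_add_swap: "(a::mpoly) + b = c + d \<Longrightarrow> a + c = b + d"
  by (simp add: mpoly_add_eq_iff add_ac)

lemma restriction_transvection:
  assumes "j \<noteq> r"
  shows "eval_subst (Var(r := 0)) (eval_subst (transvection j r) g) = eval_subst (Var(r := 0)) g"
proof -
  have "subst_comp (transvection j r) (Var(r := 0)) = Var(r := 0)"
    using assms by (auto simp: fun_eq_iff subst_comp_def transvection_def eval_subst_add)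
  then show ?thesis by (metis eval_subst_comp)
qed

lemma polys_on_restriction: "polys_on (- {r}) (eval_subst (Var(r := 0)) f)"
  by (rule polys_on_eval_subst[of UNIV]) (auto simp: polys_on_def[of UNIV])

lemma transvection_restriction_shift:
  assumes jr: "j \<noteq> r" and fixed: "eval_subst (transvection j r) f = f"
  shows "\<exists>W. eval_subst (transvection j r) (eval_subst (Var(r := 0)) f) + eval_subst (Var(r := 0)) f
    = Var r ^ 2 * W"
proof -
  let ?\<tau> = "transvection j r"
  define p0 where "p0 = eval_subst (Var(r := 0)) f"
  obtain f1 where f_decomp: "f = p0 + Var r * f1"
    using restriction_decomp[of f r] unfolding p0_def by blast
  obtain W where "f1 + eval_subst ?\<tau> f1
      = eval_subst (Var(r := 0)) (f1 + eval_subst ?\<tau> f1) + Var r * W"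
    using restriction_decomp[of "f1 + eval_subst ?\<tau> f1" r] by blast
  then have W: "f1 + eval_subst ?\<tau> f1 = Var r * W"
    by (simp add: eval_subst_add restriction_transvection[OF jr])
  have "eval_subst ?\<tau> p0 + Var r * eval_subst ?\<tau> f1 = eval_subst ?\<tau> (p0 + Var r * f1)"
    using jr by (simp add: eval_subst_add eval_subst_mult transvection_def)
  also have "\<dots> = eval_subst ?\<tau> f"
    by (simp only: f_decomp)
  also have "\<dots> = p0 + Var r * f1"
    using fixed f_decomp by (rule trans)
  finally have "eval_subst ?\<tau> p0 + p0 = Var r * (f1 + eval_subst ?\<tau> f1)"
    by (rule mpoly_add_swap[THEN trans]) (simp add: distrib_left add_ac)
  also have "\<dots> = Var r ^ 2 * W"
    using W by (simp add: power2_eq_square)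
  finally show ?thesis
    unfolding p0_def by blast
qed

lemma pderiv_var_restriction_eq_0:
  assumes jr: "j \<noteq> r" and fixed: "eval_subst (transvection j r) f = f"
  shows "pderiv_var j (eval_subst (Var(r := 0)) f) = 0"
proof -
  define p0 where "p0 = eval_subst (Var(r := 0)) f"
  obtain W where shift: "eval_subst (transvection j r) p0 + p0 = Var r ^ 2 * W"
    using transvection_restriction_shift[OF assms] unfolding p0_def by blast
  obtain R where "eval_subst (transvection j r) p0 = p0 + Var r * pderiv_var j p0 + Var r ^ 2 * R"
    using transvection_taylor[OF jr] by blast
  with shift have taylor: "Var r * pderiv_var j p0 + Var r ^ 2 * R = Var r ^ 2 * W"
    by (simp add: add_ac)
  have "Var r * (pderiv_var j p0 + Var r * (R + W))
      = (Var r * pderiv_var j p0 + Var r ^ 2 * R) + Var r ^ 2 * W"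
    by algebra
  also have "\<dots> = 0"
    unfolding taylor by simp
  finally have "pderiv_var j p0 + Var r * (R + W) = 0"
    by simp
  then have "pderiv_var j p0 = Var r * (R + W)"
    by (rule mpoly_eq_iff_add_eq_0[THEN iffD2])
  then have "eval_subst (Var(r := 0)) (pderiv_var j p0) = 0"
    by (simp add: eval_subst_mult)
  moreover have "eval_subst (Var(r := 0)) (pderiv_var j p0) = pderiv_var j p0"
    unfolding p0_def
    by (rule eval_subst_id_on[OF polys_on_pderiv_var[OF polys_on_restriction]]) simp
  ultimately show ?thesis by (simp add: p0_def)
qed

lemma restriction_eq_square:
  assumes rJ: "r \<notin> J" and fJ: "polys_on (insert r J) f" and fN: "deg_le N f"
    and fixed: "\<And>j. j \<in> J \<Longrightarrow> eval_subst (transvection j r) f = f"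
  obtains k where "eval_subst (Var(r := 0)) f = k ^ 2" and "polys_on J k" and "deg_le (N div 2) k"
proof -
  define p0 where "p0 = eval_subst (Var(r := 0)) f"
  have p0J: "polys_on J p0"
    unfolding p0_def by (rule polys_on_eval_subst[OF fJ]) auto
  have even: "even (Poly_Mapping.lookup m l)" if m: "m \<in> Poly_Mapping.keys p0" for m l
  proof (cases "l \<in> J")
    case True
    then have "pderiv_var l p0 = 0"
      unfolding p0_def using rJ fixed by (intro pderiv_var_restriction_eq_0) auto
    then show ?thesis using pderiv_var_eq_0_imp_even m by blast
  next
    case False
    then have "l \<notin> Poly_Mapping.keys m" using p0J m unfolding polys_on_def by blast
    then show ?thesis by (simp add: in_keys_iff)
  qed
  show ?thesis
  proof (rule that)
    show "eval_subst (Var(r := 0)) f = poly_sqrt p0 ^ 2"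
      using poly_sqrt_power2[OF even] by (simp add: p0_def)
    show "polys_on J (poly_sqrt p0)"
      by (rule polys_on_poly_sqrt[OF p0J])
    show "deg_le (N div 2) (poly_sqrt p0)"
      by (rule deg_le_poly_sqrt[OF _ even]) (simp add: p0_def deg_le_restrict[OF fN])
  qed
qed


section \<open>Dickson invariants as elementary symmetric functions\<close>

fun elem_sym :: "nat \<Rightarrow> 'a::comm_ring_1 list \<Rightarrow> 'a" where
  "elem_sym 0 xs = 1"
| "elem_sym (Suc k) [] = 0"
| "elem_sym (Suc k) (x # xs) = elem_sym (Suc k) xs + x * elem_sym k xs"

lemma elem_sym_swap: "elem_sym k (x # y # zs) = elem_sym k (y # x # zs)"
  by (cases k; cases "k - 1") (simp_all add: algebra_simps)

lemma elem_sym_Cons_cong: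
  "(\<And>k. elem_sym k xs = elem_sym k ys) \<Longrightarrow> elem_sym k (x # xs) = elem_sym k (x # ys)"
  by (cases k) simp_all

lemma elem_sym_move: "elem_sym k (x # ys @ zs) = elem_sym k (ys @ x # zs)"
proof (induction ys arbitrary: k)
  case (Cons y ys)
  have "elem_sym k (x # (y # ys) @ zs) = elem_sym k (y # x # ys @ zs)"
    by (simp add: elem_sym_swap)
  also have "\<dots> = elem_sym k (y # ys @ x # zs)"
    by (rule elem_sym_Cons_cong) (rule Cons.IH)
  finally show ?case by simp
qed simp

lemma elem_sym_perm: "mset xs = mset ys \<Longrightarrow> elem_sym k xs = elem_sym k ys"
proof (induction xs arbitrary: ys k)
  case (Cons x xs)
  then obtain ys1 ys2 where ys: "ys = ys1 @ x # ys2"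
    by (metis list.set_intros(1) set_mset_mset split_list)
  then have "\<And>k. elem_sym k xs = elem_sym k (ys1 @ ys2)"
    using Cons by simp
  then have "elem_sym k (x # xs) = elem_sym k (x # ys1 @ ys2)"
    by (rule elem_sym_Cons_cong)
  also have "\<dots> = elem_sym k ys"
    unfolding ys by (rule elem_sym_move)
  finally show ?case .
qed simp

lemma eval_subst_elem_sym: "eval_subst \<sigma> (elem_sym k xs) = elem_sym k (map (eval_subst \<sigma>) xs)"
  by (induction k xs rule: elem_sym.induct) (auto simp: eval_subst_add eval_subst_mult)

lemma elem_sym_fixed:
  "mset (map (eval_subst \<sigma>) xs) = mset xs \<Longrightarrow> eval_subst \<sigma> (elem_sym k xs) = elem_sym k xs"
  unfolding eval_subst_elem_sym by (rule elem_sym_perm)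

lemma homogeneous_elem_sym:
  "(\<And>x. x \<in> set xs \<Longrightarrow> homogeneous 1 x) \<Longrightarrow> homogeneous k (elem_sym k xs)"
proof (induction k xs rule: elem_sym.induct)
  case (3 k x xs)
  then have "homogeneous (1 + k) (x * elem_sym k xs)"
    by (intro homogeneous_mult) auto
  with 3 show ?case by (auto intro: homogeneous_add)
qed (auto simp: homogeneous_def tdeg_def)

lemma polys_on_elem_sym: "(\<And>x. x \<in> set xs \<Longrightarrow> polys_on V x) \<Longrightarrow> polys_on V (elem_sym k xs)"
  by (induction k xs rule: elem_sym.induct) auto

lemma deg_le_elem_sym: "(\<And>x. x \<in> set xs \<Longrightarrow> deg_le 1 x) \<Longrightarrow> deg_le k (elem_sym k xs)"
proof (induction k xs rule: elem_sym.induct)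
  case (3 k x xs)
  then have "deg_le (1 + k) (x * elem_sym k xs)"
    by (intro deg_le_mult) auto
  with 3 show ?case by auto
qed auto

definition lin_forms2 :: "mpoly list" where
  "lin_forms2 = [xa, xb, xa + xb]"

definition lin_forms3 :: "mpoly list" where
  "lin_forms3 = [xa, xb, xc, xa + xc, xa + xb, xb + xc, xa + xb + xc]"

lemma lin_forms3_props: "x \<in> set lin_forms3 \<Longrightarrow> deg_le 1 x \<and> polys_on {..<3} x"
  unfolding lin_forms3_def by (auto intro!: deg_le_add deg_le_Var polys_on_add)

text \<open>The identities hold over \<open>\<int>\<close> up to an explicit multiple of 2.\<close>

lemma elem_sym4_forms3:
  fixes a b c :: "'a::idom"
  shows "elem_sym 4 [a, b, c, a + c, a + b, b + c, a + b + c]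
    = a^4 + b^4 + c^4 + a^2*b^2 + a^2*c^2 + b^2*c^2 + a^2*b*c + a*b^2*c + a*b*c^2
      + 2 * (5*b*c^3 + 9*b^2*c^2 + 5*b^3*c + 5*a*c^3 + 22*a*b*c^2 + 22*a*b^2*c + 5*a*b^3
        + 9*a^2*c^2 + 22*a^2*b*c + 9*a^2*b^2 + 5*a^3*c + 5*a^3*b)"
  by (simp add: eval_nat_numeral) algebra

lemma elem_sym6_forms3:
  fixes a b c :: "'a::idom"
  shows "elem_sym 6 [a, b, c, a + c, a + b, b + c, a + b + c]
    = a^4*b^2 + a^2*b^4 + a^4*c^2 + a^2*c^4 + b^4*c^2 + b^2*c^4 + a^4*b*c + a*b^4*c + a*b*c^4
      + a^2*b^2*c^2 + 2 * (b^3*c^3 + a*b*c^4 + 6*a*b^2*c^3 + 6*a*b^3*c^2 + a*b^4*c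
        + 6*a^2*b*c^3 + 11*a^2*b^2*c^2 + 6*a^2*b^3*c + a^3*c^3 + 6*a^3*b*c^2 + 6*a^3*b^2*c
        + a^3*b^3 + a^4*b*c)"
  by (simp add: eval_nat_numeral) algebra

lemma elem_sym7_forms3:
  fixes a b c :: "'a::idom"
  shows "elem_sym 7 [a, b, c, a + c, a + b, b + c, a + b + c]
    = a^4*b^2*c + a^4*b*c^2 + a^2*b^4*c + a*b^4*c^2 + a^2*b*c^4 + a*b^2*c^4
      + 2 * (a*b^3*c^3 + 2*a^2*b^2*c^3 + 2*a^2*b^3*c^2 + a^3*b*c^3 + 2*a^3*b^2*c^2 + a^3*b^3*c)"
  by (simp add: eval_nat_numeral) algebra

lemma dick2_eq_elem_sym: "dick2 = elem_sym 4 lin_forms3"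
  using elem_sym4_forms3[of xa xb xc] by (simp add: lin_forms3_def dick2_def)

lemma dick1_eq_elem_sym: "dick1 = elem_sym 6 lin_forms3"
  using elem_sym6_forms3[of xa xb xc] by (simp add: lin_forms3_def dick1_def)

lemma dick0_eq_elem_sym: "dick0 = elem_sym 7 lin_forms3"
  using elem_sym7_forms3[of xa xb xc] by (simp add: lin_forms3_def dick0_def)

lemma dick0_eq_prod: "dick0 = xa * xb * xc * (xa + xc) * (xa + xb) * (xb + xc) * (xa + xb + xc)"
  by (simp add: dick0_eq_elem_sym lin_forms3_def eval_nat_numeral mult_ac)

lemma dick0_neq_0: "dick0 \<noteq> 0"
  using Var_add_Var_add_Var_neq_0[of 0 1 2] by (simp add: dick0_eq_prod)

definition dick1_GL2 :: mpoly where
  "dick1_GL2 = elem_sym 2 lin_forms2"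

definition dick0_GL2 :: mpoly where
  "dick0_GL2 = elem_sym 3 lin_forms2"

lemma dick0_GL2_eq_prod: "dick0_GL2 = xa * xb * (xa + xb)"
  by (simp add: dick0_GL2_def lin_forms2_def eval_nat_numeral mult_ac)

lemma dick0_GL2_neq_0: "dick0_GL2 \<noteq> 0"
  by (simp add: dick0_GL2_eq_prod)

lemma elem_sym2_forms2:
  fixes a b :: "'a::idom"
  shows "(elem_sym 2 [a, b, a + b])^2 = a^4 + b^4 + a^2*b^2 + 2 * (3*a^3*b + 5*a^2*b^2 + 3*a*b^3)"
  by (simp add: eval_nat_numeral) algebra

lemma elem_sym3_forms2:
  fixes a b :: "'a::idom"
  shows "(elem_sym 3 [a, b, a + b])^2 = a^4*b^2 + a^2*b^4 + 2 * (a^3*b^3)"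
  by (simp add: eval_nat_numeral) algebra

lemma dick2_restriction: "eval_subst (Var(2 := 0)) dick2 = dick1_GL2 ^ 2"
  using elem_sym2_forms2[of xa xb]
  by (simp add: dick2_def dick1_GL2_def lin_forms2_def eval_subst_add eval_subst_mult eval_subst_power)

lemma dick1_restriction: "eval_subst (Var(2 := 0)) dick1 = dick0_GL2 ^ 2"
  using elem_sym3_forms2[of xa xb]
  by (simp add: dick1_def dick0_GL2_def lin_forms2_def eval_subst_add eval_subst_mult eval_subst_power)

lemma dick0_restriction: "eval_subst (Var(2 := 0)) dick0 = 0"
  by (simp add: dick0_eq_prod eval_subst_mult)

lemma dick1_GL2_restriction: "eval_subst (Var(1 := 0)) dick1_GL2 = xa ^ 2"
  by (simp add: dick1_GL2_def lin_forms2_def eval_nat_numeral eval_subst_add eval_subst_mult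
      power2_eq_square)

lemma dick0_GL2_restriction: "eval_subst (Var(1 := 0)) dick0_GL2 = 0"
  by (simp add: dick0_GL2_eq_prod eval_subst_mult)


definition act_subst :: "nat \<Rightarrow> mat \<Rightarrow> nat \<Rightarrow> mpoly" where
  "act_subst n M = (\<lambda>i. if i < n then (\<Sum>j<n. Const (M i j) * Var j) else Var i)"

lemma act_eq_eval_subst: "act n M = eval_subst (act_subst n M)"
  by (simp add: fun_eq_iff act_def act_subst_def)

lemma act_subst_eqI:
  assumes "\<And>i. i < n \<Longrightarrow> (\<Sum>j<n. Const (M i j) * Var j) = \<sigma> i" and "\<And>i. n \<le> i \<Longrightarrow> \<sigma> i = Var i"
  shows "act_subst n M = \<sigma>"
  using assms by (auto simp: fun_eq_iff act_subst_def not_less)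

definition gen_B3 :: "nat \<Rightarrow> mpoly" where
  "gen_B3 = Var(0 := xc, 1 := xa, 2 := xb)"

definition gen_A6 :: "nat \<Rightarrow> mpoly" where
  "gen_A6 = Var(0 := Var 0 + Var 2 + Var 5, 3 := Var 3 + Var 4)"

definition gen_B6 :: "nat \<Rightarrow> mpoly" where
  "gen_B6 = Var(0 := Var 2, 1 := Var 0, 2 := Var 1, 3 := Var 5, 4 := Var 3, 5 := Var 4)"

lemma less_6_cases: "(i::nat) < 6 \<Longrightarrow> i = 0 \<or> i = 1 \<or> i = 2 \<or> i = 3 \<or> i = 4 \<or> i = 5"
  by auto

lemma less_3_cases: "(i::nat) < 3 \<Longrightarrow> i = 0 \<or> i = 1 \<or> i = 2"
  by auto

lemmas matrix_simps = DA_def DB_def mat_of_list_def eval_nat_numeral add.assoc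

lemma act_subst_DA3: "act_subst 3 DA = transvection 0 2"
  by (rule act_subst_eqI, elim less_3_cases[THEN disjE] disjE) (simp_all add: matrix_simps transvection_def)

lemma act_subst_DB3: "act_subst 3 DB = gen_B3"
  by (rule act_subst_eqI, elim less_3_cases[THEN disjE] disjE) (simp_all add: matrix_simps gen_B3_def)

lemma act_subst_DA6: "act_subst 6 DA = gen_A6"
  by (rule act_subst_eqI, elim less_6_cases[THEN disjE] disjE) (simp_all add: matrix_simps gen_A6_def)

lemma act_subst_DB6: "act_subst 6 DB = gen_B6"
  by (rule act_subst_eqI, elim less_6_cases[THEN disjE] disjE) (simp_all add: matrix_simps gen_B6_def)

lemma DG_lower_left_eq_0: "g \<in> DG \<Longrightarrow> 3 \<le> i \<Longrightarrow> i < 6 \<Longrightarrow> j < 3 \<Longrightarrow> g i j = 0"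
proof (induction g arbitrary: i j rule: DG.induct)
  case gen_A
  then have "i = 3 \<or> i = 4 \<or> i = 5" "j = 0 \<or> j = 1 \<or> j = 2" by auto
  then show ?case by (elim disjE) (simp_all add: matrix_simps)
next
  case gen_B
  then have "i = 3 \<or> i = 4 \<or> i = 5" "j = 0 \<or> j = 1 \<or> j = 2" by auto
  then show ?case by (elim disjE) (simp_all add: matrix_simps)
next
  case (mult M N)
  show ?case
    unfolding matmul_def using mult by (intro sum.neutral ballI) (case_tac "x < 3"; simp)
qed

lemma act_matmul:
  assumes "\<And>i k. i < n \<Longrightarrow> k < n \<Longrightarrow> matmul 6 M N i k = (\<Sum>j<n. M i j * N j k)"
  shows "act n (matmul 6 M N) p = act n N (act n M p)"
proof -
  have "subst_comp (act_subst n M) (act_subst n N) = act_subst n (matmul 6 M N)"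
  proof
    fix i show "subst_comp (act_subst n M) (act_subst n N) i = act_subst n (matmul 6 M N) i"
    proof (cases "i < n")
      case True
      have "subst_comp (act_subst n M) (act_subst n N) i
          = (\<Sum>j<n. \<Sum>k<n. Const (M i j) * (Const (N j k) * Var k))"
        using True by (simp add: subst_comp_def act_subst_def eval_subst_sum eval_subst_mult
            sum_distrib_left)
      also have "\<dots> = (\<Sum>k<n. (\<Sum>j<n. Const (M i j) * Const (N j k)) * Var k)"
        by (subst sum.swap) (simp add: sum_distrib_right mult.assoc)
      also have "\<dots> = act_subst n (matmul 6 M N) i"
        using True assms by (simp add: act_subst_def Const_sum Const_mult)
      finally show ?thesis .
    qed (simp add: subst_comp_def act_subst_def)
  qed
  then show ?thesis
    by (metis act_eq_eval_subst eval_subst_comp)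
qed

lemma fixed_by_DG_iff:
  assumes "\<And>M N p. N \<in> DG \<Longrightarrow> act n (matmul 6 M N) p = act n N (act n M p)"
  shows "(\<forall>g\<in>DG. act n g p = p) \<longleftrightarrow> act n DA p = p \<and> act n DB p = p"
proof (intro iffI ballI)
  fix g assume gens: "act n DA p = p \<and> act n DB p = p" and "g \<in> DG"
  from this(2) show "act n g p = p"
    by (induction g rule: DG.induct) (simp_all add: assms gens)
qed (simp_all add: DG.gen_A DG.gen_B)

lemma Inv6_iff:
  "p \<in> Inv6 \<longleftrightarrow> p \<in> polys_in 6 \<and> eval_subst gen_A6 p = p \<and> eval_subst gen_B6 p = p"
proof -
  have "act 6 (matmul 6 M N) p = act 6 N (act 6 M p)" for M N p
    by (rule act_matmul) (simp add: matmul_def)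
  then show ?thesis
    unfolding Inv6_def using fixed_by_DG_iff[of 6 p]
    by (simp add: act_eq_eval_subst act_subst_DA6 act_subst_DB6)
qed

lemma Inv3_iff:
  "p \<in> Inv3 \<longleftrightarrow> p \<in> polys_in 3 \<and> eval_subst (transvection 0 2) p = p \<and> eval_subst gen_B3 p = p"
proof -
  have "act 3 (matmul 6 M N) p = act 3 N (act 3 M p)" if N: "N \<in> DG" for M N p
  proof (rule act_matmul)
    fix i k :: nat assume "i < 3" "k < 3"
    have "(\<Sum>j<6. M i j * N j k) = (\<Sum>j<3. M i j * N j k)"
      by (rule sum.mono_neutral_right) (use DG_lower_left_eq_0[OF N] \<open>k < 3\<close> in auto)
    then show "matmul 6 M N i k = (\<Sum>j<3. M i j * N j k)"
      by (simp add: matmul_def)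
  qed
  then show ?thesis
    unfolding Inv3_def using fixed_by_DG_iff[of 3 p]
    by (simp add: act_eq_eval_subst act_subst_DA3 act_subst_DB3)
qed

definition rho_subst :: "nat \<Rightarrow> mpoly" where
  "rho_subst = (\<lambda>i. if i < 3 then Var i else 0)"

lemma rho_eq_eval_subst: "rho = eval_subst rho_subst"
  by (simp add: fun_eq_iff rho_def rho_subst_def)

lemma rho_polys_in: "p \<in> polys_in 6 \<Longrightarrow> rho p \<in> polys_in 3"
  unfolding polys_in_iff_polys_on rho_eq_eval_subst
  by (rule polys_on_eval_subst[of "{..<6}"]) (auto simp: rho_subst_def)

lemma rho_id: "p \<in> polys_in 3 \<Longrightarrow> rho p = p"
  unfolding polys_in_iff_polys_on rho_eq_eval_subst
  by (erule eval_subst_id_on) (simp add: rho_subst_def)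

lemma rho_image_polys_in: "rho ` polys_in 6 = polys_in 3"
proof
  show "polys_in 3 \<subseteq> rho ` polys_in 6"
  proof
    fix q assume q: "q \<in> polys_in 3"
    then have "q \<in> polys_in 6"
      using polys_on_mono[of "{..<3}" q "{..<6}"] by (auto simp: polys_in_iff_polys_on)
    then show "q \<in> rho ` polys_in 6"
      using rho_id[OF q] by (metis image_eqI)
  qed
qed (use rho_polys_in in blast)

lemma rho_act:
  assumes g: "g \<in> DG" and p: "p \<in> polys_in 6"
  shows "rho (act 6 g p) = act 3 g (rho p)"
proof -
  have "subst_comp (act_subst 6 g) rho_subst i = subst_comp rho_subst (act_subst 3 g) i"
    if i: "i < 6" for i
  proof -
    have "subst_comp (act_subst 6 g) rho_subst i = (\<Sum>j<6. Const (g i j) * rho_subst j)"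
      using i by (simp add: subst_comp_def act_subst_def eval_subst_sum eval_subst_mult)
    also have "\<dots> = (\<Sum>j<3. Const (g i j) * Var j)"
      by (rule sum.mono_neutral_cong_right) (auto simp: rho_subst_def)
    also have "\<dots> = subst_comp rho_subst (act_subst 3 g) i"
      using DG_lower_left_eq_0[OF g _ i] by (simp add: subst_comp_def rho_subst_def act_subst_def)
    finally show ?thesis .
  qed
  then have "eval_subst (subst_comp (act_subst 6 g) rho_subst) p
      = eval_subst (subst_comp rho_subst (act_subst 3 g)) p"
    using p by (intro eval_subst_cong_on[of "{..<6}"]) (simp_all add: polys_in_iff_polys_on)
  then show ?thesis
    by (simp add: eval_subst_comp rho_eq_eval_subst act_eq_eval_subst)
qed


lemmas linear_subst_simps = subst_word_def subst_comp_def transvection_def gen_B3_def gen_A6_def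
  gen_B6_def eval_subst_add eval_subst_Var fun_upd_apply add_ac mpoly_add_self mpoly_add_self_left

lemma elem_sym_lin_forms2_fixed:
  "eval_subst (transvection 0 1) (elem_sym k lin_forms2) = elem_sym k lin_forms2"
  "eval_subst (transvection 1 0) (elem_sym k lin_forms2) = elem_sym k lin_forms2"
  by (rule elem_sym_fixed, simp add: lin_forms2_def linear_subst_simps add_mset_commute)+

lemma elem_sym_lin_forms3_fixed:
  "eval_subst (transvection 0 2) (elem_sym k lin_forms3) = elem_sym k lin_forms3"
  "eval_subst gen_B3 (elem_sym k lin_forms3) = elem_sym k lin_forms3"
  by (rule elem_sym_fixed, simp add: lin_forms3_def linear_subst_simps add_mset_commute)+

lemma GL3_word_fixed:
  assumes "eval_subst (transvection 0 2) f = f" and "eval_subst gen_B3 f = f"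
    and "set ws \<subseteq> {transvection 0 2, gen_B3}"
  shows "eval_subst (subst_word ws) f = f"
  using assms by (intro eval_subst_word_fixed) auto

inductive subalg_le :: "(mpoly \<times> nat) list \<Rightarrow> nat \<Rightarrow> mpoly \<Rightarrow> bool" for gens where
  Const: "subalg_le gens N (Const c)"
| add: "subalg_le gens N p \<Longrightarrow> subalg_le gens N q \<Longrightarrow> subalg_le gens N (p + q)"
| gen_mult: "(c, d) \<in> set gens \<Longrightarrow> subalg_le gens N p \<Longrightarrow> N + d \<le> M \<Longrightarrow> subalg_le gens M (c * p)"

lemma subalg_le_mono: "subalg_le gens N p \<Longrightarrow> N \<le> M \<Longrightarrow> subalg_le gens M p"
proof (induction arbitrary: M rule: subalg_le.induct)
  case (gen_mult c d N p M')
  then show ?case by (meson le_trans nat_add_left_cancel_le subalg_le.gen_mult)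
qed (auto intro: subalg_le.intros)

lemma subalg_le_0: "subalg_le gens N 0"
  using subalg_le.Const[of gens N 0] by simp

lemma subalg_le_Const_mult: "subalg_le gens N p \<Longrightarrow> subalg_le gens N (Const c * p)"
proof (induction rule: subalg_le.induct)
  case (Const N c')
  then show ?case by (metis Const_mult subalg_le.Const)
next
  case (add N p q)
  then show ?case by (simp add: distrib_left subalg_le.add)
next
  case (gen_mult c' d N p M)
  then show ?case by (metis mult.left_commute subalg_le.gen_mult)
qed

lemma subalg_le_sum: "(\<And>a. a \<in> A \<Longrightarrow> subalg_le gens N (f a)) \<Longrightarrow> subalg_le gens N (sum f A)"
  by (induction A rule: infinite_finite_induct) (auto intro: subalg_le_0 subalg_le.add)

lemma subalg_le_power: "(c, d) \<in> set gens \<Longrightarrow> subalg_le gens (d * e) (c ^ e)"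
proof (induction e)
  case 0
  then show ?case using subalg_le.Const[of gens 0 1] by simp
next
  case (Suc e)
  then show ?case using subalg_le.gen_mult[of c d gens "d * e" "c ^ e"] by simp
qed

lemma subalg_le_subst_single:
  assumes cd: "(c, d) \<in> set gens" and m: "polys_on {i} m" "deg_le E m"
  shows "subalg_le gens (d * E) (eval_subst (Var(i := c)) m)"
  unfolding eval_subst_monom
proof (rule subalg_le_sum)
  fix n assume n: "n \<in> Poly_Mapping.keys m"
  then have "Poly_Mapping.keys n \<subseteq> {i}"
    using m(1) by (auto simp: polys_on_def)
  then have monom: "monom_subst (Var(i := c)) n = c ^ Poly_Mapping.lookup n i"
    and "tdeg n = Poly_Mapping.lookup n i"
    using monom_subst_superset[of "{i}" n] tdeg_superset[of "{i}" n] by simp_all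
  then have "Poly_Mapping.lookup n i \<le> E"
    using m(2) n by (auto simp: deg_le_def)
  then have "subalg_le gens (d * E) (c ^ Poly_Mapping.lookup n i)"
    using subalg_le_power[OF cd] subalg_le_mono mult_le_mono2 by blast
  then show "subalg_le gens (d * E) (Const (Poly_Mapping.lookup m n) * monom_subst (Var(i := c)) n)"
    unfolding monom by (rule subalg_le_Const_mult)
qed

lemma subalg_le_induct_subring:
  assumes "subalg_le gens N p"
    and "\<And>c. P (Const c)" and "\<And>p q. P p \<Longrightarrow> P q \<Longrightarrow> P (p + q)" and "\<And>p q. P p \<Longrightarrow> P q \<Longrightarrow> P (p * q)"
    and "\<And>c d. (c, d) \<in> set gens \<Longrightarrow> P c"
  shows "P p"
  using assms(1) by induction (use assms(2-) in auto)

lemma deg_le_subalg_le: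
  assumes "subalg_le gens N p" and "\<And>c d. (c, d) \<in> set gens \<Longrightarrow> deg_le d c"
  shows "deg_le N p"
  using assms(1)
proof induction
  case (gen_mult c d N p M)
  then have "deg_le (d + N) (c * p)"
    using assms(2) by (intro deg_le_mult) auto
  with gen_mult show ?case by (auto elim: deg_le_mono)
qed auto


section \<open>Dickson's theorem for \<open>GL\<^sub>2(F\<^sub>2)\<close>\<close>

definition dick_gens2 :: "(mpoly \<times> nat) list" where
  "dick_gens2 = [(dick1_GL2, 2), (dick0_GL2, 3)]"

lemma fixed_mult_cancel:
  assumes "eval_subst \<sigma> (c * p) = c * p" and "eval_subst \<sigma> c = c" and "c \<noteq> 0"
  shows "eval_subst \<sigma> p = p"
  using assms by (simp add: eval_subst_mult)

lemma dick_gens2_props: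
  assumes "(c, d) \<in> set dick_gens2"
  shows "polys_on {0, 1} c" "deg_le d c"
    "eval_subst (transvection 0 1) c = c" "eval_subst (transvection 1 0) c = c"
proof -
  have forms: "polys_on {0, 1} x \<and> deg_le 1 x" if "x \<in> set lin_forms2" for x
    using that by (auto simp: lin_forms2_def intro!: deg_le_add deg_le_Var)
  have "polys_on {0, 1} (elem_sym k lin_forms2)" "deg_le k (elem_sym k lin_forms2)" for k
    using forms by (blast intro: polys_on_elem_sym deg_le_elem_sym)+
  moreover have "c = elem_sym 2 lin_forms2 \<and> d = 2 \<or> c = elem_sym 3 lin_forms2 \<and> d = 3"
    using assms by (auto simp: dick_gens2_def dick1_GL2_def dick0_GL2_def)
  ultimately show "polys_on {0, 1} c" "deg_le d c"
    "eval_subst (transvection 0 1) c = c" "eval_subst (transvection 1 0) c = c"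
    using elem_sym_lin_forms2_fixed by auto
qed

lemma subalg_le_dick_gens2_props:
  assumes "subalg_le dick_gens2 N p"
  shows "polys_on {0, 1} p" "deg_le N p"
    "eval_subst (transvection 0 1) p = p" "eval_subst (transvection 1 0) p = p"
proof -
  show "polys_on {0, 1} p"
    by (rule subalg_le_induct_subring[OF assms]) (use dick_gens2_props in auto)
  show "deg_le N p"
    by (rule deg_le_subalg_le[OF assms]) (use dick_gens2_props in auto)
  show "eval_subst (transvection 0 1) p = p" "eval_subst (transvection 1 0) p = p"
    by (rule subalg_le_induct_subring[OF assms, where P = "\<lambda>p. eval_subst _ p = p"];
        use dick_gens2_props in \<open>auto simp: eval_subst_add eval_subst_mult\<close>)+
qed

lemma restriction_subst_dick1_GL2:
  assumes "polys_on {0} m"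
  shows "eval_subst (Var(1 := 0)) (eval_subst (Var(0 := dick1_GL2)) m) = m ^ 2"
proof -
  have "eval_subst (Var(1 := 0)) (eval_subst (Var(0 := dick1_GL2)) m)
      = eval_subst (subst_comp (Var(0 := dick1_GL2)) (Var(1 := 0))) m"
    by (rule eval_subst_comp[symmetric])
  also have "\<dots> = eval_subst (\<lambda>i. Var i ^ 2) m"
    by (rule eval_subst_cong_on[OF assms])
       (simp only: subst_comp_def singleton_iff fun_upd_same dick1_GL2_restriction)
  also have "\<dots> = m ^ 2"
    by (rule mpoly_power2_eq_subst[symmetric])
  finally show ?thesis .
qed

lemma GL2_invariant_dvd_dick0:
  assumes hV: "polys_on {0, 1} h" and hN: "deg_le N h"
    and h01: "eval_subst (transvection 0 1) h = h" and h10: "eval_subst (transvection 1 0) h = h"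
    and h0: "eval_subst (Var(1 := 0)) h = 0"
  obtains h' where "h = dick0_GL2 * h'" and "polys_on {0, 1} h'" and "deg_le (N - 3) h'"
    and "h' \<noteq> 0 \<longrightarrow> 3 \<le> N"
    and "eval_subst (transvection 0 1) h' = h'" and "eval_subst (transvection 1 0) h' = h'"
proof -
  have "eval_subst (subst_word [transvection 1 0, transvection 0 1]) h = h"
    by (rule eval_subst_word_fixed) (use h01 h10 in auto)
  then have "eval_subst (Var(0 := 0)) h = 0"
    by (rule restriction_eq_0_transfer[OF h0]) (simp add: linear_subst_simps)
  moreover have "eval_subst (Var(0 := Var 1)) h = 0"
    by (rule restriction_eq_0_transfer[OF h0 h10]) (simp add: linear_subst_simps)
  ultimately have hyperplanes: "(i, q) \<in> set [(1, 0), (0, 0), (0, Var 1)] \<Longrightarrow>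
      i \<in> {0, 1} \<and> polys_on {0, 1} q \<and> deg_le 1 q \<and> eval_subst (Var(i := q)) h = 0" for i q
    using h0 by (auto intro: deg_le_Var)
  have independent: "sorted_wrt (\<lambda>(i, q) (j, r). eval_subst (Var(j := r)) (Var i + q) \<noteq> 0)
      [(1, 0), (0, 0), (0, Var 1)]"
    by (simp add: eval_subst_add)
  obtain h' where h': "h = (\<Prod>(i, q)\<leftarrow>[(1, 0), (0, 0), (0, Var 1)]. Var i + q) * h'"
      "polys_on {0, 1} h'" "deg_le (N - 3) h'" "h' \<noteq> 0 \<longrightarrow> 3 \<le> N"
    using product_linear_factors[OF hV hN hyperplanes independent] by (auto simp: numeral_3_eq_3)
  then have h_eq: "h = dick0_GL2 * h'"
    by (simp add: dick0_GL2_eq_prod mult_ac)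
  show ?thesis
  proof (rule that[OF h_eq h'(2-4)])
    show "eval_subst (transvection 0 1) h' = h'" "eval_subst (transvection 1 0) h' = h'"
      using h01 h10 elem_sym_lin_forms2_fixed dick0_GL2_neq_0 unfolding h_eq
      by (auto intro: fixed_mult_cancel simp: dick0_GL2_def)
  qed
qed

lemma GL2_invariant_restriction_lift:
  assumes kV: "polys_on {0, 1} k" and kN: "deg_le N k" and k01: "eval_subst (transvection 0 1) k = k"
  obtains g where "subalg_le dick_gens2 N g"
    and "eval_subst (Var(1 := 0)) g = eval_subst (Var(1 := 0)) k"
proof -
  obtain m where m: "eval_subst (Var(1 := 0)) k = m ^ 2" "polys_on {0} m" "deg_le (N div 2) m"
    by (rule restriction_eq_square[of 1 "{0}" k N]) (use assms in \<open>auto simp: insert_commute\<close>)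
  define g where "g = eval_subst (Var(0 := dick1_GL2)) m"
  have "subalg_le dick_gens2 (2 * (N div 2)) g"
    unfolding g_def by (rule subalg_le_subst_single[OF _ m(2,3)]) (simp add: dick_gens2_def)
  then have "subalg_le dick_gens2 N g"
    by (rule subalg_le_mono) simp
  moreover have "eval_subst (Var(1 := 0)) g = eval_subst (Var(1 := 0)) k"
    unfolding g_def m(1) by (rule restriction_subst_dick1_GL2[OF m(2)])
  ultimately show ?thesis
    using that by blast
qed

theorem GL2_invariant_subalg_le:
  "polys_on {0, 1} k \<Longrightarrow> deg_le N k \<Longrightarrow> eval_subst (transvection 0 1) k = k
    \<Longrightarrow> eval_subst (transvection 1 0) k = k \<Longrightarrow> subalg_le dick_gens2 N k"
proof (induction N arbitrary: k rule: less_induct)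
  case (less N k)
  obtain g where g: "subalg_le dick_gens2 N g"
    and g_res: "eval_subst (Var(1 := 0)) g = eval_subst (Var(1 := 0)) k"
    using GL2_invariant_restriction_lift[OF less.prems(1-3)] by blast
  note g_props = subalg_le_dick_gens2_props[OF g]
  obtain h' where h': "k + g = dick0_GL2 * h'" "polys_on {0, 1} h'" "deg_le (N - 3) h'"
      "h' \<noteq> 0 \<longrightarrow> 3 \<le> N"
      "eval_subst (transvection 0 1) h' = h'" "eval_subst (transvection 1 0) h' = h'"
  proof (rule GL2_invariant_dvd_dick0)
    show "eval_subst (Var(1 := 0)) (k + g) = 0"
      using g_res by (simp add: eval_subst_add)
  qed (use less.prems g_props in \<open>auto simp: eval_subst_add\<close>)
  have k_eq: "k = g + dick0_GL2 * h'"
    using h'(1) by (simp add: mpoly_add_eq_iff add.commute)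
  show ?case
  proof (cases "h' = 0")
    case False
    then have "subalg_le dick_gens2 (N - 3) h'"
      using h' less.IH[of "N - 3" h'] by auto
    then have "subalg_le dick_gens2 N (dick0_GL2 * h')"
      using False h'(4) by (intro subalg_le.gen_mult[of _ 3]) (auto simp: dick_gens2_def)
    then show ?thesis
      unfolding k_eq by (rule subalg_le.add[OF g])
  qed (use g k_eq in simp)
qed


section \<open>Dickson's theorem for \<open>GL\<^sub>3(F\<^sub>2)\<close>\<close>

definition dick_gens3 :: "(mpoly \<times> nat) list" where
  "dick_gens3 = [(dick2, 4), (dick1, 6), (dick0, 7)]"

lemma dickson_eval_Var:
  "dickson_eval (Var 0) = dick0" "dickson_eval (Var 1) = dick1" "dickson_eval (Var 2) = dick2"
  by (simp_all add: dickson_eval_def)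

lemma dickson_eval_add: "dickson_eval (p + q) = dickson_eval p + dickson_eval q"
  and dickson_eval_mult: "dickson_eval (p * q) = dickson_eval p * dickson_eval q"
  by (simp_all add: dickson_eval_def eval_subst_add eval_subst_mult)

lemma dick_gens3_props:
  assumes "(c, d) \<in> set dick_gens3"
  shows "polys_on {..<3} c" "deg_le d c"
    "eval_subst (transvection 0 2) c = c" "eval_subst gen_B3 c = c"
    "\<exists>r\<in>polys_in 3. dickson_eval r = c"
proof -
  have "polys_on {..<3} (elem_sym k lin_forms3)" "deg_le k (elem_sym k lin_forms3)" for k
    using lin_forms3_props by (blast intro: polys_on_elem_sym deg_le_elem_sym)+
  moreover have "c = elem_sym 4 lin_forms3 \<and> d = 4 \<or> c = elem_sym 6 lin_forms3 \<and> d = 6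
      \<or> c = elem_sym 7 lin_forms3 \<and> d = 7"
    using assms by (auto simp: dick_gens3_def dick2_eq_elem_sym dick1_eq_elem_sym dick0_eq_elem_sym)
  ultimately show "polys_on {..<3} c" "deg_le d c"
    "eval_subst (transvection 0 2) c = c" "eval_subst gen_B3 c = c"
    using elem_sym_lin_forms3_fixed by auto
  have "Var i \<in> polys_in 3" if "i < 3" for i
    using that by (simp add: polys_in_iff_polys_on)
  then show "\<exists>r\<in>polys_in 3. dickson_eval r = c"
    using assms dickson_eval_Var by (auto simp: dick_gens3_def)
qed

lemma subalg_le_dick_gens3_props:
  assumes "subalg_le dick_gens3 N p"
  shows "polys_on {..<3} p" "deg_le N p"
    "eval_subst (transvection 0 2) p = p" "eval_subst gen_B3 p = p"
    "\<exists>r\<in>polys_in 3. dickson_eval r = p"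
proof -
  show "polys_on {..<3} p"
    by (rule subalg_le_induct_subring[OF assms]) (use dick_gens3_props in auto)
  show "deg_le N p"
    by (rule deg_le_subalg_le[OF assms]) (use dick_gens3_props in auto)
  show "eval_subst (transvection 0 2) p = p" "eval_subst gen_B3 p = p"
    by (rule subalg_le_induct_subring[OF assms, where P = "\<lambda>p. eval_subst _ p = p"];
        use dick_gens3_props in \<open>auto simp: eval_subst_add eval_subst_mult\<close>)+
  show "\<exists>r\<in>polys_in 3. dickson_eval r = p"
  proof (rule subalg_le_induct_subring[OF assms])
    show "\<exists>r\<in>polys_in 3. dickson_eval r = Const c" for c
      by (rule bexI[of _ "Const c"]) (simp_all add: dickson_eval_def polys_in_iff_polys_on)
    show "\<exists>r\<in>polys_in 3. dickson_eval r = p + q"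
      if "\<exists>r\<in>polys_in 3. dickson_eval r = p" "\<exists>r\<in>polys_in 3. dickson_eval r = q" for p q
    proof -
      from that obtain r1 r2 where "r1 \<in> polys_in 3" "dickson_eval r1 = p"
        and "r2 \<in> polys_in 3" "dickson_eval r2 = q"
        by blast
      then show ?thesis
        by (intro bexI[of _ "r1 + r2"]) (auto simp: polys_in_iff_polys_on dickson_eval_add)
    qed
    show "\<exists>r\<in>polys_in 3. dickson_eval r = p * q"
      if "\<exists>r\<in>polys_in 3. dickson_eval r = p" "\<exists>r\<in>polys_in 3. dickson_eval r = q" for p q
    proof -
      from that obtain r1 r2 where "r1 \<in> polys_in 3" "dickson_eval r1 = p"
        and "r2 \<in> polys_in 3" "dickson_eval r2 = q"
        by blast
      then show ?thesis
        by (intro bexI[of _ "r1 * r2"]) (auto simp: polys_in_iff_polys_on dickson_eval_mult)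
    qed
  qed (rule dick_gens3_props)
qed

text \<open>The restriction to \<open>x\<^sub>2 = 0\<close> maps the generators \<open>c\<^sub>2, c\<^sub>1\<close> of weights 4, 6 onto the
  squares of the generators of \<open>GL\<^sub>2(F\<^sub>2)\<close>-invariants of weights 2, 3.\<close>

lemma subalg_le_lift_square:
  "subalg_le dick_gens2 N k \<Longrightarrow> \<exists>g. subalg_le dick_gens3 (2 * N) g \<and> eval_subst (Var(2 := 0)) g = k ^ 2"
proof (induction rule: subalg_le.induct)
  case (Const N c)
  then show ?case
    by (intro exI[of _ "Const c"]) (simp add: subalg_le.Const)
next
  case (add N p q)
  then obtain g1 g2 where "subalg_le dick_gens3 (2 * N) g1" "eval_subst (Var(2 := 0)) g1 = p ^ 2"
      "subalg_le dick_gens3 (2 * N) g2" "eval_subst (Var(2 := 0)) g2 = q ^ 2"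
    by blast
  moreover from this have "eval_subst (Var(2 := 0)) (g1 + g2) = (p + q) ^ 2"
    by (simp only: eval_subst_add mpoly_power2_add)
  ultimately show ?case
    by (blast intro: subalg_le.add)
next
  case (gen_mult c d N p M)
  then obtain g where g: "subalg_le dick_gens3 (2 * N) g" "eval_subst (Var(2 := 0)) g = p ^ 2"
    by blast
  from gen_mult.hyps(1) have "(c, d) = (dick1_GL2, 2) \<or> (c, d) = (dick0_GL2, 3)"
    by (simp add: dick_gens2_def)
  then show ?case
  proof
    assume cd: "(c, d) = (dick1_GL2, 2)"
    have "eval_subst (Var(2 := 0)) (dick2 * g) = (dick1_GL2 * p) ^ 2"
      by (simp only: eval_subst_mult dick2_restriction g(2) power_mult_distrib)
    moreover have "subalg_le dick_gens3 (2 * M) (dick2 * g)"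
      using g(1) gen_mult.hyps(3) cd by (intro subalg_le.gen_mult[of dick2 4]) (auto simp: dick_gens3_def)
    ultimately show ?case
      using cd by blast
  next
    assume cd: "(c, d) = (dick0_GL2, 3)"
    have "eval_subst (Var(2 := 0)) (dick1 * g) = (dick0_GL2 * p) ^ 2"
      by (simp only: eval_subst_mult dick1_restriction g(2) power_mult_distrib)
    moreover have "subalg_le dick_gens3 (2 * M) (dick1 * g)"
      using g(1) gen_mult.hyps(3) cd by (intro subalg_le.gen_mult[of dick1 6]) (auto simp: dick_gens3_def)
    ultimately show ?case
      using cd by blast
  qed
qed

lemma restriction_fixed:
  assumes "eval_subst W f = f" and "polys_on V f"
    and "\<And>i. i \<in> V \<Longrightarrow> subst_comp (Var(r := 0)) \<sigma> i = subst_comp W (Var(r := 0)) i"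
  shows "eval_subst \<sigma> (eval_subst (Var(r := 0)) f) = eval_subst (Var(r := 0)) f"
proof -
  have "eval_subst \<sigma> (eval_subst (Var(r := 0)) f) = eval_subst (subst_comp (Var(r := 0)) \<sigma>) f"
    by (simp add: eval_subst_comp)
  also have "\<dots> = eval_subst (subst_comp W (Var(r := 0))) f"
    by (rule eval_subst_cong_on[OF assms(2,3)])
  also have "\<dots> = eval_subst (Var(r := 0)) f"
    by (simp add: eval_subst_comp assms(1))
  finally show ?thesis .
qed

text \<open>The words in the generators \<open>A = transvection 0 2\<close> and \<open>B = gen_B3\<close> below were found by a
  breadth-first search through \<open>GL\<^sub>3(F\<^sub>2)\<close>.\<close>

lemma GL3_invariant_fixed:
  assumes fA: "eval_subst (transvection 0 2) f = f" and fB: "eval_subst gen_B3 f = f"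
    and fV: "polys_on {..<3} f"
  shows "eval_subst (transvection 1 2) f = f"
    and "eval_subst (transvection 0 1) (eval_subst (Var(2 := 0)) f) = eval_subst (Var(2 := 0)) f"
    and "eval_subst (transvection 1 0) (eval_subst (Var(2 := 0)) f) = eval_subst (Var(2 := 0)) f"
proof -
  let ?A = "transvection 0 2" and ?B = gen_B3
  have word: "eval_subst (subst_word ws) f = f" if "set ws \<subseteq> {?A, ?B}" for ws
    using GL3_word_fixed[OF fA fB that] .
  show "eval_subst (transvection 1 2) f = f"
    by (rule eval_subst_fixed_by_word[OF fV, of "[?A, ?B, ?A, ?B, ?B, ?A, ?B, ?A, ?B, ?B]"])
       (use fA fB in \<open>auto dest!: less_3_cases simp: linear_subst_simps\<close>)
  show "eval_subst (transvection 0 1) (eval_subst (Var(2 := 0)) f) = eval_subst (Var(2 := 0)) f"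
    by (rule restriction_fixed[OF word[of "[?B, ?B, ?A, ?B, ?A, ?B, ?B, ?A, ?B]"] fV])
       (auto dest!: less_3_cases simp: linear_subst_simps)
  show "eval_subst (transvection 1 0) (eval_subst (Var(2 := 0)) f) = eval_subst (Var(2 := 0)) f"
    by (rule restriction_fixed[OF word[of "[?B, ?A, ?B, ?B]"] fV])
       (auto dest!: less_3_cases simp: linear_subst_simps)
qed


lemma GL3_invariant_hyperplanes_eq_0:
  assumes hA: "eval_subst (transvection 0 2) h = h" and hB: "eval_subst gen_B3 h = h"
    and h0: "eval_subst (Var(2 := 0)) h = 0"
  shows "eval_subst (Var(1 := 0)) h = 0" "eval_subst (Var(0 := 0)) h = 0"
    "eval_subst (Var(0 := Var 1)) h = 0" "eval_subst (Var(2 := Var 0)) h = 0"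
    "eval_subst (Var(2 := Var 1)) h = 0" "eval_subst (Var(2 := Var 0 + Var 1)) h = 0"
proof -
  let ?A = "transvection 0 2" and ?B = gen_B3
  have word: "eval_subst (subst_word ws) h = h" if "set ws \<subseteq> {?A, ?B}" for ws
    using GL3_word_fixed[OF hA hB that] .
  show "eval_subst (Var(1 := 0)) h = 0"
    by (rule restriction_eq_0_transfer[OF h0 word[of "[?B]"]]) (simp_all add: linear_subst_simps)
  show "eval_subst (Var(0 := 0)) h = 0"
    by (rule restriction_eq_0_transfer[OF h0 word[of "[?B, ?B]"]]) (simp_all add: linear_subst_simps)
  show "eval_subst (Var(0 := Var 1)) h = 0"
    by (rule restriction_eq_0_transfer[OF h0 word[of "[?B, ?B, ?A, ?B, ?B]"]])
       (simp_all add: linear_subst_simps)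
  show "eval_subst (Var(2 := Var 0)) h = 0"
    by (rule restriction_eq_0_transfer[OF h0 word[of "[?B, ?B, ?A]"]]) (simp_all add: linear_subst_simps)
  show "eval_subst (Var(2 := Var 1)) h = 0"
    by (rule restriction_eq_0_transfer[OF h0 word[of "[?B, ?B, ?A, ?B]"]])
       (simp_all add: linear_subst_simps)
  show "eval_subst (Var(2 := Var 0 + Var 1)) h = 0"
    by (rule restriction_eq_0_transfer[OF h0 word[of "[?B, ?B, ?A, ?B, ?B, ?A]"]])
       (simp_all add: linear_subst_simps)
qed

lemma GL3_invariant_dvd_dick0:
  assumes hV: "polys_on {..<3} h" and hN: "deg_le N h"
    and hA: "eval_subst (transvection 0 2) h = h" and hB: "eval_subst gen_B3 h = h"
    and h0: "eval_subst (Var(2 := 0)) h = 0"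
  obtains h' where "h = dick0 * h'" and "polys_on {..<3} h'" and "deg_le (N - 7) h'"
    and "h' \<noteq> 0 \<longrightarrow> 7 \<le> N"
    and "eval_subst (transvection 0 2) h' = h'" and "eval_subst gen_B3 h' = h'"
proof -
  let ?hs = "[(2, 0), (1, 0), (0, 0), (0, Var 1), (2, Var 0), (2, Var 1), (2, Var 0 + Var 1)]"
  note GL3_invariant_hyperplanes_eq_0[OF hA hB h0]
  then have hyperplanes: "(i, q) \<in> set ?hs \<Longrightarrow>
      i \<in> {..<3} \<and> polys_on {..<3} q \<and> deg_le 1 q \<and> eval_subst (Var(i := q)) h = 0" for i q
    using h0 by (auto simp: deg_le_Var)
  have independent: "sorted_wrt (\<lambda>(i, q) (j, r). eval_subst (Var(j := r)) (Var i + q) \<noteq> 0) ?hs"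
    by (simp add: eval_subst_add add_ac)
  obtain h' where h': "h = (\<Prod>(i, q)\<leftarrow>?hs. Var i + q) * h'"
      "polys_on {..<3} h'" "deg_le (N - 7) h'" "h' \<noteq> 0 \<longrightarrow> 7 \<le> N"
    using product_linear_factors[OF hV hN hyperplanes independent] by (auto simp: eval_nat_numeral)
  then have h_eq: "h = dick0 * h'"
    by (simp add: dick0_eq_prod mult_ac add_ac)
  show ?thesis
  proof (rule that[OF h_eq h'(2-4)])
    show "eval_subst (transvection 0 2) h' = h'" "eval_subst gen_B3 h' = h'"
      using hA hB elem_sym_lin_forms3_fixed dick0_neq_0 unfolding h_eq
      by (auto intro: fixed_mult_cancel simp: dick0_eq_elem_sym)
  qed
qed

lemma GL3_invariant_restriction_lift:
  assumes fV: "polys_on {..<3} f" and fN: "deg_le N f"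
    and fA: "eval_subst (transvection 0 2) f = f" and fB: "eval_subst gen_B3 f = f"
  obtains g where "subalg_le dick_gens3 N g"
    and "eval_subst (Var(2 := 0)) g = eval_subst (Var(2 := 0)) f"
proof -
  note fixed = GL3_invariant_fixed[OF fA fB fV]
  obtain k where k: "eval_subst (Var(2 := 0)) f = k ^ 2" "polys_on {0, 1} k" "deg_le (N div 2) k"
  proof (rule restriction_eq_square[of 2 "{0, 1}" f N])
    have "insert 2 {0, 1} = {..<3::nat}"
      by auto
    then show "polys_on (insert 2 {0, 1}) f"
      using fV by simp
    show "eval_subst (transvection j 2) f = f" if "j \<in> {0, 1}" for j
      using that fA fixed(1) by auto
  qed (use fN in auto)
  have k_fixed: "eval_subst \<sigma> k = k"
    if "eval_subst \<sigma> (eval_subst (Var(2 := 0)) f) = eval_subst (Var(2 := 0)) f" for \<sigma>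
  proof (rule mpoly_power2_inj)
    have "(eval_subst \<sigma> k) ^ 2 = eval_subst \<sigma> (eval_subst (Var(2 := 0)) f)"
      by (simp only: k(1) eval_subst_power)
    with that show "(eval_subst \<sigma> k) ^ 2 = k ^ 2"
      by (simp only: k(1))
  qed
  have "subalg_le dick_gens2 (N div 2) k"
    using k(2,3) k_fixed[OF fixed(2)] k_fixed[OF fixed(3)] by (rule GL2_invariant_subalg_le)
  then obtain g where "subalg_le dick_gens3 (2 * (N div 2)) g" and "eval_subst (Var(2 := 0)) g = k ^ 2"
    using subalg_le_lift_square by blast
  moreover from this(1) have "subalg_le dick_gens3 N g"
    by (rule subalg_le_mono) simp
  ultimately show ?thesis
    using that k(1) by simp
qed

theorem GL3_invariant_subalg_le:
  "polys_on {..<3} f \<Longrightarrow> deg_le N f \<Longrightarrow> eval_subst (transvection 0 2) f = f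
    \<Longrightarrow> eval_subst gen_B3 f = f \<Longrightarrow> subalg_le dick_gens3 N f"
proof (induction N arbitrary: f rule: less_induct)
  case (less N f)
  obtain g where g: "subalg_le dick_gens3 N g"
    and g_res: "eval_subst (Var(2 := 0)) g = eval_subst (Var(2 := 0)) f"
    using GL3_invariant_restriction_lift[OF less.prems] by blast
  note g_props = subalg_le_dick_gens3_props[OF g]
  obtain h' where h': "f + g = dick0 * h'" "polys_on {..<3} h'" "deg_le (N - 7) h'"
      "h' \<noteq> 0 \<longrightarrow> 7 \<le> N" "eval_subst (transvection 0 2) h' = h'" "eval_subst gen_B3 h' = h'"
  proof (rule GL3_invariant_dvd_dick0)
    show "eval_subst (Var(2 := 0)) (f + g) = 0"
      using g_res by (simp add: eval_subst_add)
  qed (use less.prems g_props in \<open>auto simp: eval_subst_add\<close>)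
  have f_eq: "f = g + dick0 * h'"
    using h'(1) by (simp add: mpoly_add_eq_iff add.commute)
  show ?case
  proof (cases "h' = 0")
    case False
    then have "subalg_le dick_gens3 (N - 7) h'"
      using h' less.IH[of "N - 7" h'] by auto
    then have "subalg_le dick_gens3 N (dick0 * h')"
      using False h'(4) by (intro subalg_le.gen_mult[of _ 7]) (auto simp: dick_gens3_def)
    then show ?thesis
      unfolding f_eq by (rule subalg_le.add[OF g])
  qed (use g f_eq in simp)
qed


section \<open>Algebraic independence of the Dickson invariants\<close>

lemma inj_on_eval_subst_iff:
  "inj_on (eval_subst \<sigma>) (Collect (polys_on V)) \<longleftrightarrow> (\<forall>s. polys_on V s \<longrightarrow> eval_subst \<sigma> s = 0 \<longrightarrow> s = 0)"
proof (intro iffI allI impI)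
  fix s assume "inj_on (eval_subst \<sigma>) (Collect (polys_on V))" "polys_on V s" "eval_subst \<sigma> s = 0"
  then show "s = 0"
    using inj_onD[of "eval_subst \<sigma>" _ s 0] by simp
next
  assume kernel: "\<forall>s. polys_on V s \<longrightarrow> eval_subst \<sigma> s = 0 \<longrightarrow> s = 0"
  show "inj_on (eval_subst \<sigma>) (Collect (polys_on V))"
  proof (rule inj_onI)
    fix x y assume "x \<in> Collect (polys_on V)" "y \<in> Collect (polys_on V)"
      and "eval_subst \<sigma> x = eval_subst \<sigma> y"
    then have "x + y = 0"
      using kernel by (simp add: eval_subst_add polys_on_add)
    then show "x = y"
      by (rule mpoly_eq_iff_add_eq_0[THEN iffD2])
  qed
qed

text \<open>Write \<open>r = r\<^sub>0 + x\<^sub>i r'\<close> with \<open>r\<^sub>0\<close> free of \<open>x\<^sub>i\<close>. Applying \<open>\<tau>\<close> to \<open>\<sigma>(r) = 0\<close>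
  kills the second summand, so \<open>r\<^sub>0 = 0\<close>; then \<open>\<sigma>(r') = 0\<close> with \<open>r'\<close> of smaller degree.\<close>

lemma inj_on_eval_subst_insert:
  assumes i: "i \<in> V" and \<sigma>i: "\<sigma> i \<noteq> 0" and \<tau>\<sigma>i: "eval_subst \<tau> (\<sigma> i) = 0"
    and inj: "inj_on (eval_subst (subst_comp \<sigma> \<tau>)) (Collect (polys_on (V - {i})))"
  shows "inj_on (eval_subst \<sigma>) (Collect (polys_on V))"
proof -
  have "r = 0" if "deg_le N r" "polys_on V r" "eval_subst \<sigma> r = 0" for N r
    using that
  proof (induction N arbitrary: r rule: less_induct)
    case (less N r)
    obtain r' where r: "r = eval_subst (Var(i := 0)) r + (Var i + 0) * r'"
      and r': "deg_le (N - 1) r'" "r' \<noteq> 0 \<longrightarrow> N \<noteq> 0" "polys_on V r'"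
      by (rule factor_linear[OF less.prems(1) deg_le_0 less.prems(2) polys_on_0 i])
    define r0 where "r0 = eval_subst (Var(i := 0)) r"
    have r0V: "polys_on (V - {i}) r0"
      unfolding r0_def by (rule polys_on_eval_subst[OF less.prems(2)]) auto
    have r_eq: "r = r0 + Var i * r'"
      using r unfolding r0_def[symmetric] by simp
    have sum: "eval_subst \<sigma> r0 + \<sigma> i * eval_subst \<sigma> r' = 0"
      using less.prems(3) unfolding r_eq by (simp add: eval_subst_add eval_subst_mult)
    then have "eval_subst \<tau> (eval_subst \<sigma> r0 + \<sigma> i * eval_subst \<sigma> r') = 0"
      by simp
    then have "eval_subst (subst_comp \<sigma> \<tau>) r0 = 0"
      using \<tau>\<sigma>i by (simp add: eval_subst_comp eval_subst_add eval_subst_mult)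
    then have "r0 = 0"
      using inj r0V by (simp add: inj_on_eval_subst_iff)
    then have "eval_subst \<sigma> r' = 0"
      using sum \<sigma>i by simp
    then have "r' = 0"
      using less.IH[OF _ r'(1,3)] r'(2) by fastforce
    then show "r = 0"
      using r_eq \<open>r0 = 0\<close> by simp
  qed
  then show ?thesis
    by (meson deg_le_exists inj_on_eval_subst_iff)
qed

lemma inj_on_eval_subst_empty: "inj_on (eval_subst \<sigma>) (Collect (polys_on {}))"
proof (rule inj_onI)
  fix x y assume "x \<in> Collect (polys_on {})" "y \<in> Collect (polys_on {})"
    and "eval_subst \<sigma> x = eval_subst \<sigma> y"
  moreover have "eval_subst \<sigma> p = p" if "polys_on {} p" for p
    using that by (rule eval_subst_id_on) simp
  ultimately show "x = y" by simp
qed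

lemma inj_on_eval_subst_cong:
  assumes "inj_on (eval_subst \<sigma>) (Collect (polys_on V))" and "\<And>i. i \<in> V \<Longrightarrow> \<sigma> i = \<tau> i"
  shows "inj_on (eval_subst \<tau>) (Collect (polys_on V))"
proof -
  have "eval_subst \<sigma> s = eval_subst \<tau> s" if "s \<in> Collect (polys_on V)" for s
    using that by (auto intro: eval_subst_cong_on assms(2))
  with assms(1) show ?thesis
    using inj_on_cong by blast
qed

lemma polys_in_eq_Collect: "polys_in n = Collect (polys_on {..<n})"
  by (auto simp: polys_in_iff_polys_on)

definition dickson_subst_GL2 :: "nat \<Rightarrow> mpoly" where
  "dickson_subst_GL2 = Var(1 := dick0_GL2, 2 := dick1_GL2)"

definition dickson_subst :: "nat \<Rightarrow> mpoly" where
  "dickson_subst = (\<lambda>i. if i = 0 then dick0 else if i = 1 then dick1 else if i = 2 then dick2 else 0)"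

lemma dickson_eval_eq_eval_subst: "dickson_eval = eval_subst dickson_subst"
  by (simp add: dickson_eval_def dickson_subst_def)

lemma inj_on_dickson_subst_GL2: "inj_on (eval_subst dickson_subst_GL2) (Collect (polys_on {1, 2}))"
proof (rule inj_on_eval_subst_insert[of 1 _ _ "Var(1 := 0)"])
  have "inj_on (eval_subst (Var(2 := xa ^ 2))) (Collect (polys_on {2}))"
    by (rule inj_on_eval_subst_insert[of 2 _ _ "Var(0 := 0)"])
       (simp_all add: subst_comp_def eval_subst_power inj_on_eval_subst_cong[OF inj_on_eval_subst_empty])
  then have "inj_on (eval_subst (subst_comp dickson_subst_GL2 (Var(1 := 0)))) (Collect (polys_on {2}))"
    by (rule inj_on_eval_subst_cong)
       (use dick1_GL2_restriction in \<open>simp add: subst_comp_def dickson_subst_GL2_def\<close>)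
  moreover have "{1, 2} - {1} = {2::nat}"
    by auto
  ultimately show "inj_on (eval_subst (subst_comp dickson_subst_GL2 (Var(1 := 0))))
      (Collect (polys_on ({1, 2} - {1})))"
    by simp
qed (use dick0_GL2_restriction in \<open>simp_all add: dickson_subst_GL2_def dick0_GL2_neq_0\<close>)

lemma inj_on_dickson_eval: "inj_on dickson_eval (polys_in 3)"
proof -
  have "inj_on (eval_subst dickson_subst) (Collect (polys_on {..<3}))"
  proof (rule inj_on_eval_subst_insert[of 0 _ _ "Var(2 := 0)"])
    have "eval_subst (subst_comp dickson_subst (Var(2 := 0))) s = (eval_subst dickson_subst_GL2 s) ^ 2"
      if "polys_on {1, 2} s" for s
    proof -
      have "eval_subst (subst_comp dickson_subst (Var(2 := 0))) s
          = eval_subst (subst_comp dickson_subst_GL2 (\<lambda>i. Var i ^ 2)) s"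
        by (rule eval_subst_cong_on[OF that])
           (use dick1_restriction dick2_restriction in
             \<open>auto simp: subst_comp_def dickson_subst_def dickson_subst_GL2_def
               mpoly_power2_eq_subst[symmetric]\<close>)
      then show ?thesis
        by (simp only: eval_subst_comp mpoly_power2_eq_subst[symmetric])
    qed
    moreover have "inj_on (\<lambda>s. (eval_subst dickson_subst_GL2 s) ^ 2) (Collect (polys_on {1, 2}))"
      using inj_on_dickson_subst_GL2 unfolding inj_on_def by (blast dest: mpoly_power2_inj)
    moreover have "{..<3} - {0::nat} = {1, 2}"
      by auto
    ultimately show "inj_on (eval_subst (subst_comp dickson_subst (Var(2 := 0))))
        (Collect (polys_on ({..<3} - {0})))"
      using inj_on_cong[of "Collect (polys_on {1, 2})" "eval_subst (subst_comp dickson_subst (Var(2 := 0)))"]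
      by simp
  qed (simp_all add: dickson_subst_def dick0_neq_0 dick0_restriction)
  then show ?thesis
    by (simp add: dickson_eval_eq_eval_subst polys_in_eq_Collect)
qed


lemma dickson_subst_props:
  assumes "i < 3"
  shows "polys_on {..<3} (dickson_subst i)"
    and "eval_subst (transvection 0 2) (dickson_subst i) = dickson_subst i"
    and "eval_subst gen_B3 (dickson_subst i) = dickson_subst i"
  using assms dick_gens3_props[of dick0 7] dick_gens3_props[of dick1 6] dick_gens3_props[of dick2 4]
  by (auto dest!: less_3_cases simp: dickson_subst_def dick_gens3_def)

lemma dickson_eval_image: "dickson_eval ` polys_in 3 = Inv3"
proof
  show "dickson_eval ` polys_in 3 \<subseteq> Inv3"
  proof
    fix q assume "q \<in> dickson_eval ` polys_in 3"
    then obtain r where r: "polys_on {..<3} r" "q = eval_subst dickson_subst r"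
      by (auto simp: dickson_eval_eq_eval_subst polys_in_iff_polys_on)
    have "polys_on {..<3} q"
      unfolding r(2) by (rule polys_on_eval_subst[OF r(1)]) (simp add: dickson_subst_props)
    moreover have "eval_subst (transvection 0 2) q = q" "eval_subst gen_B3 q = q"
      unfolding r(2) using r(1) by (auto intro!: eval_subst_fixed simp: dickson_subst_props)
    ultimately show "q \<in> Inv3"
      by (simp add: Inv3_iff polys_in_iff_polys_on)
  qed
  show "Inv3 \<subseteq> dickson_eval ` polys_in 3"
  proof
    fix q assume "q \<in> Inv3"
    then have "polys_on {..<3} q" "eval_subst (transvection 0 2) q = q" "eval_subst gen_B3 q = q"
      by (simp_all add: Inv3_iff polys_in_iff_polys_on)
    moreover obtain N where "deg_le N q"
      using deg_le_exists by blast
    ultimately have "subalg_le dick_gens3 N q"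
      by (intro GL3_invariant_subalg_le)
    then show "q \<in> dickson_eval ` polys_in 3"
      using subalg_le_dick_gens3_props(5) by blast
  qed
qed

lemma dickson_eval_bij: "bij_betw dickson_eval (polys_in 3) Inv3"
  by (simp add: bij_betw_def inj_on_dickson_eval dickson_eval_image)

definition lifted_forms :: "mpoly list" where
  "lifted_forms = [Var 0, Var 1, Var 2, Var 0 + Var 2 + Var 5, Var 0 + Var 1 + Var 3,
     Var 1 + Var 2 + Var 4, Var 0 + Var 1 + Var 2 + Var 3 + Var 4 + Var 5]"

lemma rho_elem_sym_lifted_forms: "rho (elem_sym k lifted_forms) = elem_sym k lin_forms3"
  by (simp add: rho_eq_eval_subst eval_subst_elem_sym lifted_forms_def lin_forms3_def rho_subst_def
      eval_subst_add)

lemma elem_sym_lifted_forms_Inv6: "elem_sym k lifted_forms \<in> Inv6"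
proof -
  have "polys_on {..<6} (elem_sym k lifted_forms)"
    by (rule polys_on_elem_sym) (auto simp: lifted_forms_def intro!: polys_on_add)
  moreover have "eval_subst gen_A6 (elem_sym k lifted_forms) = elem_sym k lifted_forms"
    "eval_subst gen_B6 (elem_sym k lifted_forms) = elem_sym k lifted_forms"
    by (rule elem_sym_fixed, simp add: lifted_forms_def linear_subst_simps add_mset_commute)+
  ultimately show ?thesis
    by (simp add: Inv6_iff polys_in_iff_polys_on)
qed

lemma homogeneous_elem_sym_lifted_forms: "homogeneous k (elem_sym k lifted_forms)"
proof (rule homogeneous_elem_sym)
  have "homogeneous 1 (Var i)" for i
    by (simp add: homogeneous_def Var_def tdeg_def)
  then show "homogeneous 1 x" if "x \<in> set lifted_forms" for x
    using that by (auto simp: lifted_forms_def intro!: homogeneous_add)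
qed

lemma dickson_lifts:
  "\<exists>p\<in>Inv6. homogeneous 7 p \<and> rho p = dick0"
  "\<exists>p\<in>Inv6. homogeneous 6 p \<and> rho p = dick1"
  "\<exists>p\<in>Inv6. homogeneous 4 p \<and> rho p = dick2"
  using elem_sym_lifted_forms_Inv6 homogeneous_elem_sym_lifted_forms rho_elem_sym_lifted_forms
  by (auto simp: dick0_eq_elem_sym dick1_eq_elem_sym dick2_eq_elem_sym)

lemma dickson_eval_lift:
  assumes "r \<in> polys_in 3"
  shows "\<exists>p\<in>Inv6. rho p = dickson_eval r"
proof -
  have r: "polys_on {..<3} r"
    using assms by (simp add: polys_in_iff_polys_on)
  define lift :: "nat \<Rightarrow> mpoly"
    where "lift i = elem_sym (if i = 0 then 7 else if i = 1 then 6 else 4) lifted_forms" for i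
  have lift: "lift i \<in> Inv6" "rho (lift i) = dickson_subst i" if "i < 3" for i
    using that elem_sym_lifted_forms_Inv6 rho_elem_sym_lifted_forms
    by (auto dest!: less_3_cases simp: lift_def dickson_subst_def dick0_eq_elem_sym dick1_eq_elem_sym
        dick2_eq_elem_sym)
  have "polys_on {..<6} (eval_subst lift r)"
    by (rule polys_on_eval_subst[OF r]) (use lift in \<open>auto simp: Inv6_iff polys_in_iff_polys_on\<close>)
  moreover have "eval_subst gen_A6 (eval_subst lift r) = eval_subst lift r"
    "eval_subst gen_B6 (eval_subst lift r) = eval_subst lift r"
    using r lift by (auto intro!: eval_subst_fixed simp: Inv6_iff)
  moreover have "rho (eval_subst lift r) = eval_subst (subst_comp lift rho_subst) r"
    by (simp add: rho_eq_eval_subst eval_subst_comp)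
  moreover have "\<dots> = dickson_eval r"
    unfolding dickson_eval_eq_eval_subst using lift(2)
    by (intro eval_subst_cong_on[OF r]) (simp add: subst_comp_def rho_eq_eval_subst)
  ultimately show ?thesis
    by (auto simp: Inv6_iff polys_in_iff_polys_on)
qed

lemma rho_image_Inv6: "rho ` Inv6 = Inv3"
proof
  show "rho ` Inv6 \<subseteq> Inv3"
  proof
    fix q assume "q \<in> rho ` Inv6"
    then obtain p where p: "p \<in> Inv6" "q = rho p"
      by blast
    then have p6: "p \<in> polys_in 6" and fixed: "\<forall>g\<in>DG. act 6 g p = p"
      by (simp_all add: Inv6_def)
    have "act 3 g q = q" if "g \<in> DG" for g
      using rho_act[OF that p6] fixed that p(2) by simp
    then show "q \<in> Inv3"
      using rho_polys_in[OF p6] p(2) by (simp add: Inv3_def)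
  qed
  show "Inv3 \<subseteq> rho ` Inv6"
  proof
    fix q assume "q \<in> Inv3"
    then obtain r where "r \<in> polys_in 3" "q = dickson_eval r"
      using dickson_eval_image by blast
    then show "q \<in> rho ` Inv6"
      using dickson_eval_lift by (metis imageI)
  qed
qed

theorem mainTheorem12:
  shows "rho ` polys_in 6 = polys_in 3
       \<and> (\<forall>g\<in>DG. \<forall>p\<in>polys_in 6. rho (act 6 g p) = act 3 g (rho p))
       \<and> rho ` Inv6 = Inv3
       \<and> bij_betw dickson_eval (polys_in 3) Inv3
       \<and> (\<exists>p\<in>Inv6. homogeneous 7 p \<and> rho p = dick0)
       \<and> (\<exists>p\<in>Inv6. homogeneous 6 p \<and> rho p = dick1)
       \<and> (\<exists>p\<in>Inv6. homogeneous 4 p \<and> rho p = dick2)"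
  using rho_image_polys_in rho_act rho_image_Inv6 dickson_eval_bij dickson_lifts by blast

end
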